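(* In the standing local setup, fix a leaf $z\mapsto(z,f(z))$ and equip the (trivial) holomorphic bundle $f^*T^{1,0}M$ over the leaf with the Hermitian metric $g_{\alpha\bar\beta}$ of $\omega_{\phi(z,\cdot)}$. Its Chern curvature $F^r{}_\alpha=-\partial_{\bar z}\big(g^{r\bar\delta}\partial_z g_{\alpha\bar\delta}\big)$ (derivatives taken along the leaf) equals $-\frac{\partial\eta^r}{\partial\bar w_i}\,\frac{\partial\eta^{\bar i}}{\partial w_\alpha}$, and it is non-positive: $F(s,s)=F^\alpha{}_\beta s^\beta\overline{s^\gamma}g_{\alpha\bar\gamma}\le0$ for every section $s$.
   Context: Standing local setup: $(M,\omega_0)$ is a Kähler manifold of complex dimension $n$, $\Sigma\subset\mathbb C$ a domain with coordinate $z$, and $\phi$ a smooth real function on $\Sigma\times M$ such that $\omega_\phi=\omega_0+\sqrt{-1}\partial\bar\partial_M\phi(z,\cdot)>0$ on $M$ for each $z$ and $(\pi_2^*\omega_0+\sqrt{-1}\partial\bar\partial\phi)^{n+1}=0$ on $\Sigma\times M$. In local holomorphic coordinates $w=(w_1,\dots,w_n)$ on $M$ write $g_{\alpha\bar\beta}=g_{0,\alpha\bar\beta}+\partial^2\phi/\partial w_\alpha\partial\bar w_\beta$ (the metric of $\omega_\phi$), $(g^{\alpha\bar\beta})$ its inverse, $\eta^\alpha=-g^{\alpha\bar\beta}\,\partial^2\phi/\partial z\partial\bar w_\beta$, $\eta^{\bar\alpha}=\overline{\eta^\alpha}$, $X=\eta^\alpha\partial/\partial w_\alpha$ (leaf vector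 field; $\partial/\partial z+X$ spans the kernel of $\pi_2^*\omega_0+\sqrt{-1}\partial\bar\partial\phi$), $\partial_z=\partial/\partial z+\eta^\alpha\partial/\partial w_\alpha$ and $\overline{\partial_z}=\partial/\partial\bar z+\eta^{\bar\alpha}\partial/\partial\bar w_\alpha$; summation over repeated indices. Integral curves of $\partial_z$ are holomorphic curves $z\mapsto(z,f(z))$ with $f'=\eta$ (the leaves). *)

theory Defs
  imports "HOL-Analysis.Analysis"
begin

text \<open>Local model: a coordinate chart U of M is an open subset of complex^'n
 (complex dimension n = CARD('n)); points of \<Sigma> \<times> U are pairs (z, w).\<close>

definition pd :: "'a::real_normed_vector \<Rightarrow> ('a \<Rightarrow> 'b::real_normed_vector) \<Rightarrow> 'a \<Rightarrow> 'b" where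
  "pd v f p = frechet_derivative f (at p) v"

fun iter_pd :: "'a::real_normed_vector list \<Rightarrow> ('a \<Rightarrow> 'b::real_normed_vector) \<Rightarrow> 'a \<Rightarrow> 'b" where
  "iter_pd [] f = f"
| "iter_pd (v # vs) f = pd v (iter_pd vs f)"

definition smooth_on :: "'a::euclidean_space set \<Rightarrow> ('a \<Rightarrow> 'b::real_normed_vector) \<Rightarrow> bool" where
  "smooth_on S f \<longleftrightarrow> open S \<and>
     (\<forall>vs. set vs \<subseteq> Basis \<longrightarrow> (iter_pd vs f) differentiable_on S \<and> continuous_on S (iter_pd vs f))"

definition dZ :: "(complex \<times> (complex^'n) \<Rightarrow> complex) \<Rightarrow> complex \<times> (complex^'n) \<Rightarrow> complex" where
  "dZ F p = (pd (1, 0) F p - \<i> * pd (\<i>, 0) F p) / 2"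
definition dZb :: "(complex \<times> (complex^'n) \<Rightarrow> complex) \<Rightarrow> complex \<times> (complex^'n) \<Rightarrow> complex" where
  "dZb F p = (pd (1, 0) F p + \<i> * pd (\<i>, 0) F p) / 2"
definition dW :: "'n::finite \<Rightarrow> (complex \<times> (complex^'n) \<Rightarrow> complex) \<Rightarrow> complex \<times> (complex^'n) \<Rightarrow> complex" where
  "dW a F p = (pd (0, axis a 1) F p - \<i> * pd (0, axis a \<i>) F p) / 2"
definition dWb :: "'n::finite \<Rightarrow> (complex \<times> (complex^'n) \<Rightarrow> complex) \<Rightarrow> complex \<times> (complex^'n) \<Rightarrow> complex" where
  "dWb a F p = (pd (0, axis a 1) F p + \<i> * pd (0, axis a \<i>) F p) / 2"

definition dWv :: "'n::finite \<Rightarrow> (complex^'n \<Rightarrow> complex) \<Rightarrow> complex^'n \<Rightarrow> complex" where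
  "dWv a h w = (pd (axis a 1) h w - \<i> * pd (axis a \<i>) h w) / 2"

definition wz :: "(complex \<Rightarrow> complex) \<Rightarrow> complex \<Rightarrow> complex" where
  "wz h z = (pd 1 h z - \<i> * pd \<i> h z) / 2"
definition wzb :: "(complex \<Rightarrow> complex) \<Rightarrow> complex \<Rightarrow> complex" where
  "wzb h z = (pd 1 h z + \<i> * pd \<i> h z) / 2"

text \<open>Kaehler metric on the chart: g0 w a b = g_{0,a bbar}(w).\<close>
definition kaehler_metric_on :: "(complex^'n) set \<Rightarrow> (complex^'n \<Rightarrow> 'n::finite \<Rightarrow> 'n \<Rightarrow> complex) \<Rightarrow> bool" where
  "kaehler_metric_on U g0 \<longleftrightarrow> open U \<and>
     (\<forall>a b. smooth_on U (\<lambda>w. g0 w a b)) \<and>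
     (\<forall>w\<in>U. \<forall>a b. cnj (g0 w a b) = g0 w b a) \<and>
     (\<forall>w\<in>U. \<forall>v::complex^'n. v \<noteq> 0 \<longrightarrow> Re (\<Sum>a\<in>UNIV. \<Sum>b\<in>UNIV. g0 w a b * v$a * cnj (v$b)) > 0) \<and>
     (\<forall>w\<in>U. \<forall>a b c. dWv c (\<lambda>u. g0 u a b) w = dWv a (\<lambda>u. g0 u c b) w)"

definition phic :: "(complex \<times> (complex^'n) \<Rightarrow> real) \<Rightarrow> complex \<times> (complex^'n) \<Rightarrow> complex" where
  "phic \<phi> p = complex_of_real (\<phi> p)"

definition gmet :: "(complex^'n \<Rightarrow> 'n::finite \<Rightarrow> 'n \<Rightarrow> complex) \<Rightarrow> (complex \<times> (complex^'n) \<Rightarrow> real)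
    \<Rightarrow> complex \<times> (complex^'n) \<Rightarrow> 'n \<Rightarrow> 'n \<Rightarrow> complex" where
  "gmet g0 \<phi> p a b = g0 (snd p) a b + dW a (dWb b (phic \<phi>)) p"

definition gmat :: "(complex^'n \<Rightarrow> 'n::finite \<Rightarrow> 'n \<Rightarrow> complex) \<Rightarrow> (complex \<times> (complex^'n) \<Rightarrow> real)
    \<Rightarrow> complex \<times> (complex^'n) \<Rightarrow> complex^'n^'n" where
  "gmat g0 \<phi> p = (\<chi> a b. gmet g0 \<phi> p a b)"

text \<open>Inverse metric g^{a bbar}, normalised by  sum_b g^{a bbar} g_{c bbar} = delta_{ac}.\<close>
definition ginv :: "(complex^'n \<Rightarrow> 'n::finite \<Rightarrow> 'n \<Rightarrow> complex) \<Rightarrow> (complex \<times> (complex^'n) \<Rightarrow> real)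
    \<Rightarrow> complex \<times> (complex^'n) \<Rightarrow> 'n \<Rightarrow> 'n \<Rightarrow> complex" where
  "ginv g0 \<phi> p a b = matrix_inv (transpose (gmat g0 \<phi> p)) $ a $ b"

definition eta :: "(complex^'n \<Rightarrow> 'n::finite \<Rightarrow> 'n \<Rightarrow> complex) \<Rightarrow> (complex \<times> (complex^'n) \<Rightarrow> real)
    \<Rightarrow> 'n \<Rightarrow> complex \<times> (complex^'n) \<Rightarrow> complex" where
  "eta g0 \<phi> a p = - (\<Sum>b\<in>UNIV. ginv g0 \<phi> p a b * dZ (dWb b (phic \<phi>)) p)"

definition etab :: "(complex^'n \<Rightarrow> 'n::finite \<Rightarrow> 'n \<Rightarrow> complex) \<Rightarrow> (complex \<times> (complex^'n) \<Rightarrow> real)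
    \<Rightarrow> 'n \<Rightarrow> complex \<times> (complex^'n) \<Rightarrow> complex" where
  "etab g0 \<phi> a p = cnj (eta g0 \<phi> a p)"

text \<open>Coefficient matrix of the (1,1)-form pi_2^* omega_0 + i dd-bar phi on \<Sigma> \<times> U
 (index None = z-direction, Some a = w_a-direction).  Its (n+1)-st power is
 (n+1)! i^(n+1) det(this matrix) times the coordinate volume form.\<close>
definition MAmat :: "(complex^'n \<Rightarrow> 'n::finite \<Rightarrow> 'n \<Rightarrow> complex) \<Rightarrow> (complex \<times> (complex^'n) \<Rightarrow> real)
    \<Rightarrow> complex \<times> (complex^'n) \<Rightarrow> complex^('n option)^('n option)" where
  "MAmat g0 \<phi> p = (\<chi> i j. case (i, j) of
      (None, None) \<Rightarrow> dZ (dZb (phic \<phi>)) p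
    | (None, Some b) \<Rightarrow> dZ (dWb b (phic \<phi>)) p
    | (Some a, None) \<Rightarrow> dW a (dZb (phic \<phi>)) p
    | (Some a, Some b) \<Rightarrow> gmet g0 \<phi> p a b)"

definition leaf_curv :: "(complex^'n \<Rightarrow> 'n::finite \<Rightarrow> 'n \<Rightarrow> complex) \<Rightarrow> (complex \<times> (complex^'n) \<Rightarrow> real)
    \<Rightarrow> (complex \<Rightarrow> complex^'n) \<Rightarrow> 'n \<Rightarrow> 'n \<Rightarrow> complex \<Rightarrow> complex" where
  "leaf_curv g0 \<phi> f r a z =
     - wzb (\<lambda>t. \<Sum>d\<in>UNIV. ginv g0 \<phi> (t, f t) r d * wz (\<lambda>s. gmet g0 \<phi> (s, f s) a d) t) z"

end

theory Submission
  imports Defs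
begin

(*
  Write D = d/dz + eta^a d/dw_a for the derivative along the leaves, Dbar for its conjugate,
  and P_b = phi_{z bbar}, so that eta^a g_{a bbar} = - P_b.  Since g is positive definite, the
  Monge-Ampere equation says that the kernel of the complex Hessian of phi on Sigma x M is
  spanned by (1, eta), i.e. D phi_{zbar} = 0.  Applying Dbar to eta^a g_{a bbar} = - P_b and
  using this equation, the Kaehler symmetry of g and the symmetry of mixed partials shows that
  eta is holomorphic along the leaves: Dbar eta = 0.  Applying d/dw_a instead gives
  g^{r dbar} D g_{a dbar} = - d_a eta^r, and commuting d/dw_a with Dbar in Dbar eta = 0 yields
  the curvature formula.  Finally, for A^r_i = d eta^r / d wbar_i the matrix A^a_i g_{a cbar} is
  symmetric in i and c, which turns F(s, s) into - |v|_g^2 with v^a = A^a_c conj (s^c).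
*)

section \<open>Directional derivatives and smooth functions\<close>

lemma pd_has_derivative: "f differentiable (at x) \<Longrightarrow> (f has_derivative (\<lambda>v. pd v f x)) (at x)"
  unfolding pd_def using frechet_derivative_works by blast

lemma pd_eqI: "(f has_derivative f') (at x) \<Longrightarrow> pd v f x = f' v"
  unfolding pd_def using frechet_derivative_at by metis

lemma pd_cong:
  assumes "open S" "x \<in> S" "\<And>y. y \<in> S \<Longrightarrow> f y = g y"
  shows "pd v f x = pd v g x"
proof -
  have "(f has_derivative f') (at x) \<longleftrightarrow> (g has_derivative f') (at x)" for f'
    using has_derivative_transform_within_open assms by metis
  then show ?thesis unfolding pd_def frechet_derivative_def by simp
qed

lemma pd_scaleR_dir:
  assumes "f differentiable (at x)"
  shows "pd (r *\<^sub>R v) f x = r *\<^sub>R pd v f x"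
proof -
  interpret bounded_linear "\<lambda>v. pd v f x"
    using has_derivative_bounded_linear[OF pd_has_derivative[OF assms]] .
  show ?thesis by (rule scaleR)
qed

lemma pd_zero_dir: "f differentiable (at x) \<Longrightarrow> pd 0 f x = 0"
  using pd_scaleR_dir[of f x 0 0] by simp

lemma pd_basis_expansion:
  fixes f :: "'a::euclidean_space \<Rightarrow> 'b::real_normed_vector"
  assumes "f differentiable (at x)"
  shows "pd v f x = (\<Sum>b\<in>Basis. (v \<bullet> b) *\<^sub>R pd b f x)"
proof -
  interpret bounded_linear "\<lambda>v. pd v f x"
    using has_derivative_bounded_linear[OF pd_has_derivative[OF assms]] .
  have "pd v f x = pd (\<Sum>b\<in>Basis. (v \<bullet> b) *\<^sub>R b) f x" by (simp add: euclidean_representation)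
  then show ?thesis by (simp add: sum scaleR)
qed

lemma pd_add:
  "f differentiable (at x) \<Longrightarrow> g differentiable (at x) \<Longrightarrow>
    pd v (\<lambda>y. f y + g y) x = pd v f x + pd v g x"
  by (rule pd_eqI) (auto intro!: has_derivative_add pd_has_derivative)

lemma pd_minus: "f differentiable (at x) \<Longrightarrow> pd v (\<lambda>y. - f y) x = - pd v f x"
  by (rule pd_eqI) (auto intro!: has_derivative_minus pd_has_derivative)

lemma pd_const: "pd v (\<lambda>y. c) x = 0"
  by (rule pd_eqI) (rule has_derivative_const)

lemma pd_mult:
  fixes f g :: "'a::real_normed_vector \<Rightarrow> 'b::real_normed_algebra"
  shows "f differentiable (at x) \<Longrightarrow> g differentiable (at x) \<Longrightarrow>
    pd v (\<lambda>y. f y * g y) x = f x * pd v g x + pd v f x * g x"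
  by (rule pd_eqI) (auto intro!: has_derivative_mult pd_has_derivative)

lemma pd_cnj: "f differentiable (at x) \<Longrightarrow> pd v (\<lambda>y. cnj (f y)) x = cnj (pd v f x)"
  by (rule pd_eqI) (auto intro!: bounded_linear.has_derivative[OF bounded_linear_cnj] pd_has_derivative)

lemma pd_sum:
  "finite A \<Longrightarrow> (\<And>i. i \<in> A \<Longrightarrow> f i differentiable (at x)) \<Longrightarrow>
    pd v (\<lambda>y. \<Sum>i\<in>A. f i y) x = (\<Sum>i\<in>A. pd v (f i) x)"
  by (rule pd_eqI) (auto intro!: has_derivative_sum pd_has_derivative)

fun Ck_on :: "nat \<Rightarrow> 'a::real_normed_vector set \<Rightarrow> ('a \<Rightarrow> 'b::real_normed_vector) \<Rightarrow> bool" where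
  "Ck_on 0 S f \<longleftrightarrow> continuous_on S f"
| "Ck_on (Suc k) S f \<longleftrightarrow> (\<forall>x\<in>S. f differentiable (at x)) \<and> (\<forall>v. Ck_on k S (pd v f))"

definition Cinf_on :: "'a::real_normed_vector set \<Rightarrow> ('a \<Rightarrow> 'b::real_normed_vector) \<Rightarrow> bool" where
  "Cinf_on S f \<longleftrightarrow> (\<forall>k. Ck_on k S f)"

lemma Ck_on_cong:
  assumes "open S" "\<And>x. x \<in> S \<Longrightarrow> f x = g x" "Ck_on k S f"
  shows "Ck_on k S g"
  using assms(2,3)
proof (induction k arbitrary: f g)
  case 0
  then show ?case using continuous_on_cong by fastforce
next
  case (Suc k)
  have "g differentiable (at x)" if "x \<in> S" for x
    using Suc.prems that has_derivative_transform_within_open[OF _ assms(1) that]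
    by (metis Ck_on.simps(2) differentiable_def)
  moreover have "Ck_on k S (pd v g)" for v
    using Suc.IH[of "pd v f" "pd v g"] Suc.prems pd_cong[OF assms(1), of _ f g] by auto
  ultimately show ?case by simp
qed

lemma Ck_on_SucI:
  assumes "open S" "\<And>x. x \<in> S \<Longrightarrow> (f has_derivative f' x) (at x)" "\<And>v. Ck_on k S (\<lambda>x. f' x v)"
  shows "Ck_on (Suc k) S f"
proof -
  have "Ck_on k S (pd v f)" for v
    using Ck_on_cong[OF assms(1) _ assms(3)] pd_eqI[OF assms(2)] by metis
  with assms(2) show ?thesis by (auto simp: differentiable_def)
qed

lemma Ck_on_Suc_imp: "Ck_on (Suc k) S f \<Longrightarrow> Ck_on k S f"
proof (induction k arbitrary: f)
  case 0
  then show ?case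
    by (auto intro!: continuous_at_imp_continuous_on differentiable_imp_continuous_within)
qed auto

lemma Ck_on_linear:
  assumes "open S" "bounded_linear L" "Ck_on k S f"
  shows "Ck_on k S (\<lambda>x. L (f x))"
  using assms(3)
proof (induction k arbitrary: f)
  case 0
  then show ?case using bounded_linear.continuous_on[OF assms(2)] by simp
next
  case (Suc k)
  then show ?case
    by (intro Ck_on_SucI[OF assms(1), where f'="\<lambda>x v. L (pd v f x)"] bounded_linear.has_derivative[OF assms(2) pd_has_derivative]) auto
qed

lemma Ck_on_const: "open S \<Longrightarrow> Ck_on k S (\<lambda>x. c)"
proof (induction k arbitrary: c)
  case (Suc k)
  then show ?case by (intro Ck_on_SucI[where f'="\<lambda>x v. 0"]) auto
qed simp

lemma Ck_on_add:
  assumes "open S" "Ck_on k S f" "Ck_on k S g"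
  shows "Ck_on k S (\<lambda>x. f x + g x)"
  using assms(2,3)
proof (induction k arbitrary: f g)
  case 0
  then show ?case by (simp add: continuous_on_add)
next
  case (Suc k)
  then show ?case
    by (intro Ck_on_SucI[OF assms(1), where f'="\<lambda>x v. pd v f x + pd v g x"] has_derivative_add
        pd_has_derivative) auto
qed

lemma Ck_on_sum:
  assumes "open S" "finite A" "\<And>i. i \<in> A \<Longrightarrow> Ck_on k S (f i)"
  shows "Ck_on k S (\<lambda>x. \<Sum>i\<in>A. f i x)"
  using assms(2,3) by (induction A rule: finite_induct) (auto intro!: Ck_on_add Ck_on_const assms(1))

lemma Ck_on_mult:
  fixes f g :: "'a::real_normed_vector \<Rightarrow> 'b::real_normed_algebra"
  assumes "open S" "Ck_on k S f" "Ck_on k S g"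
  shows "Ck_on k S (\<lambda>x. f x * g x)"
  using assms(2,3)
proof (induction k arbitrary: f g)
  case 0
  then show ?case by (simp add: continuous_on_mult)
next
  case (Suc k)
  then have "Ck_on k S f" "Ck_on k S g" using Ck_on_Suc_imp by blast+
  with Suc show ?case
    by (intro Ck_on_SucI[OF assms(1), where f'="\<lambda>x v. f x * pd v g x + pd v f x * g x"] has_derivative_mult pd_has_derivative Ck_on_add[OF assms(1)]) auto
qed

lemma Ck_on_inverse:
  fixes f :: "'a::real_normed_vector \<Rightarrow> 'b::real_normed_div_algebra"
  assumes "open S" "Ck_on k S f" "\<And>x. x \<in> S \<Longrightarrow> f x \<noteq> 0"
  shows "Ck_on k S (\<lambda>x. inverse (f x))"
  using assms(2,3)
proof (induction k arbitrary: f)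
  case 0
  then show ?case by (auto intro!: continuous_on_inverse)
next
  case (Suc k)
  then have "Ck_on k S (\<lambda>x. inverse (f x))" using Ck_on_Suc_imp by blast
  with Suc show ?case
    by (intro Ck_on_SucI[OF assms(1), where f'="\<lambda>x v. - (inverse (f x) * pd v f x * inverse (f x))"]
        Deriv.has_derivative_inverse pd_has_derivative
        Ck_on_linear[OF assms(1) bounded_linear_minus[OF bounded_linear_ident]] Ck_on_mult[OF assms(1)])
      auto
qed

lemma Cinf_on_const [simp]: "open S \<Longrightarrow> Cinf_on S (\<lambda>x. c)"
  by (simp add: Cinf_on_def Ck_on_const)

lemma Cinf_on_add: "open S \<Longrightarrow> Cinf_on S f \<Longrightarrow> Cinf_on S g \<Longrightarrow> Cinf_on S (\<lambda>x. f x + g x)"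
  by (simp add: Cinf_on_def Ck_on_add)

lemma Cinf_on_sum:
  "open S \<Longrightarrow> finite A \<Longrightarrow> (\<And>i. i \<in> A \<Longrightarrow> Cinf_on S (f i)) \<Longrightarrow> Cinf_on S (\<lambda>x. \<Sum>i\<in>A. f i x)"
  by (simp add: Cinf_on_def Ck_on_sum)

lemma Cinf_on_linear: "open S \<Longrightarrow> bounded_linear L \<Longrightarrow> Cinf_on S f \<Longrightarrow> Cinf_on S (\<lambda>x. L (f x))"
  by (simp add: Cinf_on_def Ck_on_linear)

lemma Cinf_on_minus: "open S \<Longrightarrow> Cinf_on S f \<Longrightarrow> Cinf_on S (\<lambda>x. - f x)"
  using Cinf_on_linear[OF _ bounded_linear_minus[OF bounded_linear_ident]] by auto

lemma Cinf_on_cnj: "open S \<Longrightarrow> Cinf_on S f \<Longrightarrow> Cinf_on S (\<lambda>x. cnj (f x))"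
  using Cinf_on_linear[OF _ bounded_linear_cnj] by auto

lemma Cinf_on_mult:
  fixes f g :: "'a::real_normed_vector \<Rightarrow> 'b::real_normed_algebra"
  shows "open S \<Longrightarrow> Cinf_on S f \<Longrightarrow> Cinf_on S g \<Longrightarrow> Cinf_on S (\<lambda>x. f x * g x)"
  by (simp add: Cinf_on_def Ck_on_mult)

lemma Cinf_on_prod:
  fixes f :: "'i \<Rightarrow> 'a::real_normed_vector \<Rightarrow> 'b::{real_normed_algebra,comm_ring_1}"
  assumes "open S" "finite A" "\<And>i. i \<in> A \<Longrightarrow> Cinf_on S (f i)"
  shows "Cinf_on S (\<lambda>x. \<Prod>i\<in>A. f i x)"
  using assms(2,3) by (induction A rule: finite_induct) (auto intro!: Cinf_on_mult simp: assms(1))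

lemma Cinf_on_divide:
  fixes f g :: "'a::real_normed_vector \<Rightarrow> 'b::real_normed_field"
  assumes "open S" "Cinf_on S f" "Cinf_on S g" "\<And>x. x \<in> S \<Longrightarrow> g x \<noteq> 0"
  shows "Cinf_on S (\<lambda>x. f x / g x)"
proof -
  have "Cinf_on S (\<lambda>x. inverse (g x))"
    using assms by (simp add: Cinf_on_def Ck_on_inverse)
  then show ?thesis using Cinf_on_mult[OF assms(1,2)] by (simp add: divide_inverse)
qed

lemma Cinf_on_pd: "Cinf_on S f \<Longrightarrow> Cinf_on S (pd v f)"
  unfolding Cinf_on_def by (metis Ck_on.simps(2))

lemma Cinf_on_imp_differentiable: "Cinf_on S f \<Longrightarrow> x \<in> S \<Longrightarrow> f differentiable (at x)"
  unfolding Cinf_on_def by (metis Ck_on.simps(2))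

lemma Cinf_on_imp_continuous_on: "Cinf_on S f \<Longrightarrow> continuous_on S f"
  unfolding Cinf_on_def by (metis Ck_on.simps(1))

lemma Cinf_on_cong: "open S \<Longrightarrow> (\<And>x. x \<in> S \<Longrightarrow> f x = g x) \<Longrightarrow> Cinf_on S f \<Longrightarrow> Cinf_on S g"
  unfolding Cinf_on_def using Ck_on_cong by blast

text \<open>Only derivatives along basis directions are controlled by \<^const>\<open>smooth_on\<close>; linearity of
  the derivative gives all the others.\<close>
lemma smooth_on_imp_Cinf_on:
  fixes f :: "'a::euclidean_space \<Rightarrow> 'b::real_normed_vector"
  assumes "smooth_on S f"
  shows "Cinf_on S f"
proof -
  have S: "open S" using assms smooth_on_def by auto
  have "\<forall>vs. set vs \<subseteq> Basis \<longrightarrow> Ck_on k S (iter_pd vs f)" for k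
  proof (induction k)
    case 0
    then show ?case using assms unfolding smooth_on_def by auto
  next
    case (Suc k)
    show ?case
    proof (intro allI impI)
      fix vs :: "'a list"
      assume vs: "set vs \<subseteq> Basis"
      have diff: "\<forall>x\<in>S. iter_pd vs f differentiable (at x)"
        using assms vs S unfolding smooth_on_def differentiable_on_def by (metis at_within_open)
      have IH: "Ck_on k S (pd b (iter_pd vs f))" if "b \<in> Basis" for b
        using Suc.IH[rule_format, of "b # vs"] vs that by simp
      have "Ck_on k S (\<lambda>x. \<Sum>b\<in>Basis. (v \<bullet> b) *\<^sub>R iter_pd (b # vs) f x)" for v
        by (intro Ck_on_sum[OF S finite_Basis] Ck_on_linear[OF S bounded_linear_scaleR_right])
          (simp add: IH)
      then have "Ck_on k S (pd v (iter_pd vs f))" for v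
        by (rule Ck_on_cong[OF S, rotated]) (simp add: pd_basis_expansion diff)
      with diff show "Ck_on (Suc k) S (iter_pd vs f)" by simp
    qed
  qed
  then show ?thesis unfolding Cinf_on_def by (metis empty_subsetI empty_set iter_pd.simps(1))
qed

section \<open>Symmetry of second derivatives\<close>

lemma has_derivative_along_line:
  assumes "f differentiable (at (y + t *\<^sub>R v))"
  shows "((\<lambda>s. f (y + s *\<^sub>R v)) has_derivative (\<lambda>r. r *\<^sub>R pd v f (y + t *\<^sub>R v))) (at t)"
proof -
  have "((\<lambda>s. y + s *\<^sub>R v) has_derivative (\<lambda>r. r *\<^sub>R v)) (at t)"
    by (auto intro!: derivative_eq_intros)
  from has_derivative_compose[OF this pd_has_derivative[OF assms]] show ?thesis
    by (simp add: pd_scaleR_dir[OF assms])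
qed

lemma mvt_norm_bound:
  fixes \<phi> :: "real \<Rightarrow> 'b::real_inner"
  assumes h: "0 < h"
    and der: "\<And>t. t \<in> {0..h} \<Longrightarrow> (\<phi> has_derivative (\<lambda>r. r *\<^sub>R \<phi>' t)) (at t)"
    and bound: "\<And>t. 0 < t \<Longrightarrow> t < h \<Longrightarrow> norm (\<phi>' t) \<le> B"
  shows "norm (\<phi> h - \<phi> 0) \<le> h * B"
proof -
  have "continuous_on {0..h} \<phi>"
    using der by (meson continuous_at_imp_continuous_on has_derivative_continuous)
  with h der obtain t where t: "0 < t" "t < h" "norm (\<phi> h - \<phi> 0) \<le> norm ((h - 0) *\<^sub>R \<phi>' t)"
    using mvt_general[of 0 h \<phi> "\<lambda>t r. r *\<^sub>R \<phi>' t"] by auto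
  have "norm ((h - 0) *\<^sub>R \<phi>' t) \<le> h * B" using bound[OF t(1,2)] h by simp
  with t(3) show ?thesis by (rule order_trans)
qed

lemma continuous_on_near_two_directions:
  fixes x u v :: "'a::real_normed_vector"
  assumes "open S" "x \<in> S" "continuous_on S g" "e > 0"
  obtains d where "d > 0"
    "\<And>s t. 0 \<le> s \<Longrightarrow> s < d \<Longrightarrow> 0 \<le> t \<Longrightarrow> t < d \<Longrightarrow>
      x + s *\<^sub>R u + t *\<^sub>R v \<in> S \<and> dist (g (x + s *\<^sub>R u + t *\<^sub>R v)) (g x) < e"
proof -
  obtain d1 where d1: "d1 > 0" "\<And>y. dist y x < d1 \<Longrightarrow> y \<in> S \<and> dist (g y) (g x) < e"
  proof -
    obtain d2 where "d2 > 0" "ball x d2 \<subseteq> S" using assms(1,2) open_contains_ball by blast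
    moreover have "isCont g x" using assms(1-3) continuous_on_eq_continuous_at by blast
    then obtain d3 where "d3 > 0" "\<And>y. dist y x < d3 \<Longrightarrow> dist (g y) (g x) < e"
      unfolding continuous_at_eps_delta using assms(4) by blast
    ultimately show ?thesis
      by (intro that[of "min d2 d3"]) (auto simp: dist_commute subset_iff)
  qed
  define d where "d = d1 / (norm u + norm v + 1)"
  have N: "norm u + norm v + 1 > 0" by (simp add: add_nonneg_pos)
  have d: "d > 0" unfolding d_def using d1 N by simp
  show ?thesis
  proof (rule that[OF d])
    fix s t :: real
    assume st: "0 \<le> s" "s < d" "0 \<le> t" "t < d"
    have "norm (s *\<^sub>R u + t *\<^sub>R v) \<le> s * norm u + t * norm v"
      using norm_triangle_ineq[of "s *\<^sub>R u" "t *\<^sub>R v"] st by simp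
    also have "\<dots> \<le> d * (norm u + norm v)"
      using st by (simp add: distrib_left add_mono mult_right_mono)
    also have "\<dots> < d * (norm u + norm v + 1)" using d by simp
    also have "\<dots> = d1" unfolding d_def using N by simp
    finally have "dist (x + s *\<^sub>R u + t *\<^sub>R v) x < d1" by (simp add: dist_norm)
    then show "x + s *\<^sub>R u + t *\<^sub>R v \<in> S \<and> dist (g (x + s *\<^sub>R u + t *\<^sub>R v)) (g x) < e"
      using d1(2) by simp
  qed
qed

lemma line_increment_estimate:
  fixes G :: "'a::real_normed_vector \<Rightarrow> 'b::real_inner"
  assumes h: "0 < h"
    and diff: "\<And>t. t \<in> {0..h} \<Longrightarrow> G differentiable (at (y + t *\<^sub>R w))"
    and near: "\<And>t. 0 < t \<Longrightarrow> t < h \<Longrightarrow> norm (pd w G (y + t *\<^sub>R w) - c) \<le> B"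
  shows "norm (G (y + h *\<^sub>R w) - G y - h *\<^sub>R c) \<le> h * B"
proof -
  let ?\<phi> = "\<lambda>t. G (y + t *\<^sub>R w) - t *\<^sub>R c"
  have "norm (?\<phi> h - ?\<phi> 0) \<le> h * B"
  proof (rule mvt_norm_bound[OF h _ near])
    fix t
    assume "t \<in> {0..h}"
    have "((\<lambda>t. t *\<^sub>R c) has_derivative (\<lambda>r. r *\<^sub>R c)) (at t)" by (auto intro!: derivative_eq_intros)
    from has_derivative_diff[OF has_derivative_along_line[OF diff[OF \<open>t \<in> {0..h}\<close>]] this]
    show "(?\<phi> has_derivative (\<lambda>r. r *\<^sub>R (pd w G (y + t *\<^sub>R w) - c))) (at t)"
      by (simp add: scaleR_diff_right)
  qed
  then show ?thesis by (simp add: algebra_simps)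
qed

lemma second_difference_approx:
  fixes F :: "'a::real_normed_vector \<Rightarrow> 'b::real_inner"
  assumes S: "open S" "x \<in> S" and F: "Cinf_on S F" and e: "e > 0"
  obtains d where "d > 0" "\<And>h. 0 < h \<Longrightarrow> h < d \<Longrightarrow>
     norm (F (x + h *\<^sub>R u + h *\<^sub>R v) - F (x + h *\<^sub>R u) - F (x + h *\<^sub>R v) + F x
       - (h * h) *\<^sub>R pd v (pd u F) x) \<le> e * h * h"
proof -
  define c where "c = pd v (pd u F) x"
  have Fu: "Cinf_on S (pd u F)" by (rule Cinf_on_pd[OF F])
  obtain d where d: "d > 0" and near: "\<And>s t. 0 \<le> s \<Longrightarrow> s < d \<Longrightarrow> 0 \<le> t \<Longrightarrow> t < d \<Longrightarrow>
      x + s *\<^sub>R u + t *\<^sub>R v \<in> S \<and> dist (pd v (pd u F) (x + s *\<^sub>R u + t *\<^sub>R v)) c < e"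
    using continuous_on_near_two_directions[OF S Cinf_on_imp_continuous_on[OF Cinf_on_pd[OF Fu]] e,
        where u=u and v=v] unfolding c_def by metis
  show ?thesis
  proof (rule that[OF d])
    fix h :: real
    assume h: "0 < h" "h < d"
    have inner: "norm (pd u F (x + s *\<^sub>R u + h *\<^sub>R v) - pd u F (x + s *\<^sub>R u) - h *\<^sub>R c) \<le> h * e"
      if "0 \<le> s" "s < d" for s
      using near[of s] that h
      by (intro line_increment_estimate[OF h(1)] Cinf_on_imp_differentiable[OF Fu])
        (auto simp: dist_norm less_imp_le)
    define G where "G y = F (y + h *\<^sub>R v) - F y" for y
    have G: "(G has_derivative (\<lambda>w. pd w F (y + h *\<^sub>R v) - pd w F y)) (at y)"
      if "y + h *\<^sub>R v \<in> S" "y \<in> S" for y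
    proof -
      have "((\<lambda>y. y + h *\<^sub>R v) has_derivative (\<lambda>w. w)) (at y)" by (auto intro!: derivative_eq_intros)
      from has_derivative_compose[OF this pd_has_derivative[OF Cinf_on_imp_differentiable[OF F that(1)]]]
      show ?thesis
        unfolding G_def by (rule has_derivative_diff[OF _ pd_has_derivative[OF Cinf_on_imp_differentiable[OF F that(2)]]])
    qed
    have in_S: "x + t *\<^sub>R u + h *\<^sub>R v \<in> S" "x + t *\<^sub>R u \<in> S" if "0 \<le> t" "t \<le> h" for t
      using near[of t h] near[of t 0] that h by auto
    have "norm (G (x + h *\<^sub>R u) - G x - h *\<^sub>R (h *\<^sub>R c)) \<le> h * (h * e)"
    proof (rule line_increment_estimate[OF h(1)])
      fix t
      assume "t \<in> {0..h}"
      with G[OF in_S] show "G differentiable (at (x + t *\<^sub>R u))" by (auto intro: differentiableI)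
    next
      fix t
      assume t: "0 < t" "t < h"
      then show "norm (pd u G (x + t *\<^sub>R u) - h *\<^sub>R c) \<le> h * e"
        using inner[of t] h pd_eqI[OF G[OF in_S]] by simp
    qed
    then show "norm (F (x + h *\<^sub>R u + h *\<^sub>R v) - F (x + h *\<^sub>R u) - F (x + h *\<^sub>R v) + F x
       - (h * h) *\<^sub>R pd v (pd u F) x) \<le> e * h * h"
      by (simp add: G_def c_def algebra_simps)
  qed
qed
lemma pd_pd_commute:
  fixes F :: "'a::real_normed_vector \<Rightarrow> 'b::real_inner"
  assumes "open S" "x \<in> S" "Cinf_on S F"
  shows "pd u (pd v F) x = pd v (pd u F) x"
proof -
  let ?\<delta> = "norm (pd v (pd u F) x - pd u (pd v F) x)"
  have small: "?\<delta> \<le> 2 * e" if e: "e > 0" for e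
  proof -
    obtain d1 where d1: "d1 > 0" "\<And>h. 0 < h \<Longrightarrow> h < d1 \<Longrightarrow>
        norm (F (x + h *\<^sub>R u + h *\<^sub>R v) - F (x + h *\<^sub>R u) - F (x + h *\<^sub>R v) + F x
          - (h * h) *\<^sub>R pd v (pd u F) x) \<le> e * h * h"
      using second_difference_approx[OF assms e] by blast
    obtain d2 where d2: "d2 > 0" "\<And>h. 0 < h \<Longrightarrow> h < d2 \<Longrightarrow>
        norm (F (x + h *\<^sub>R v + h *\<^sub>R u) - F (x + h *\<^sub>R v) - F (x + h *\<^sub>R u) + F x
          - (h * h) *\<^sub>R pd u (pd v F) x) \<le> e * h * h"
      using second_difference_approx[OF assms e] by blast
    define h where "h = min d1 d2 / 2"
    have h: "0 < h" "h < d1" "h < d2" unfolding h_def using d1 d2 by auto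
    define \<Delta> where "\<Delta> = F (x + h *\<^sub>R u + h *\<^sub>R v) - F (x + h *\<^sub>R u) - F (x + h *\<^sub>R v) + F x"
    have "x + h *\<^sub>R v + h *\<^sub>R u = x + h *\<^sub>R u + h *\<^sub>R v" by (simp add: algebra_simps)
    then have a: "norm (\<Delta> - (h * h) *\<^sub>R pd v (pd u F) x) \<le> e * h * h"
      "norm (\<Delta> - (h * h) *\<^sub>R pd u (pd v F) x) \<le> e * h * h"
      using d1(2)[OF h(1,2)] d2(2)[OF h(1,3)] unfolding \<Delta>_def by (simp_all add: algebra_simps)
    have "(h * h) * ?\<delta> = norm ((\<Delta> - (h * h) *\<^sub>R pd u (pd v F) x) - (\<Delta> - (h * h) *\<^sub>R pd v (pd u F) x))"
      by (simp add: algebra_simps flip: scaleR_diff_right)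
    also have "\<dots> \<le> e * h * h + e * h * h"
      by (rule order_trans[OF norm_triangle_ineq4 add_mono[OF a(2,1)]])
    finally show ?thesis using h(1) by (simp add: algebra_simps)
  qed
  show ?thesis
  proof (rule ccontr)
    assume "pd u (pd v F) x \<noteq> pd v (pd u F) x"
    then have "?\<delta> > 0" by simp
    with small[of "?\<delta> / 4"] show False by simp
  qed
qed

section \<open>Constant-coefficient first-order operators\<close>

definition first_order_op :: "(('a::real_normed_vector \<Rightarrow> complex) \<Rightarrow> 'a \<Rightarrow> complex) \<Rightarrow> bool" where
  "first_order_op D \<longleftrightarrow> (\<exists>e1 e2 c. D = (\<lambda>F p. (pd e1 F p + c * pd e2 F p) / 2))"

lemma first_order_op_dZ: "first_order_op dZ"
  unfolding first_order_op_def dZ_def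
  by (intro exI[of _ "(1, 0)"] exI[of _ "(\<i>, 0)"] exI[of _ "- \<i>"]) (simp add: fun_eq_iff)

lemma first_order_op_dZb: "first_order_op dZb"
  unfolding first_order_op_def dZb_def by (intro exI) (rule refl)

lemma first_order_op_dW: "first_order_op (dW a)"
  unfolding first_order_op_def dW_def
  by (intro exI[of _ "(0, axis a 1)"] exI[of _ "(0, axis a \<i>)"] exI[of _ "- \<i>"]) (simp add: fun_eq_iff)

lemma first_order_op_dWb: "first_order_op (dWb a)"
  unfolding first_order_op_def dWb_def by (intro exI) (rule refl)

lemma first_order_op_Cinf_on:
  assumes "first_order_op D" "open S" "Cinf_on S F"
  shows "Cinf_on S (D F)"
proof -
  obtain e1 e2 c where D: "\<And>F p. D F p = (pd e1 F p + c * pd e2 F p) / 2"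
    using assms(1) unfolding first_order_op_def by blast
  have "Cinf_on S (\<lambda>p. (pd e1 F p + c * pd e2 F p) / 2)"
    using assms(2,3) by (intro Cinf_on_divide Cinf_on_add Cinf_on_mult Cinf_on_pd) auto
  then show ?thesis by (simp add: D[abs_def])
qed

lemma first_order_op_commute:
  assumes "first_order_op D1" "first_order_op D2" "open S" "p \<in> S" "Cinf_on S F"
  shows "D1 (D2 F) p = D2 (D1 F) p"
proof -
  obtain a1 a2 c where D1: "\<And>F p. D1 F p = (pd a1 F p + c * pd a2 F p) / 2"
    using assms(1) unfolding first_order_op_def by blast
  obtain b1 b2 d where D2: "\<And>F p. D2 F p = (pd b1 F p + d * pd b2 F p) / 2"
    using assms(2) unfolding first_order_op_def by blast
  have diff: "pd e F differentiable (at p)" for e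
    using Cinf_on_imp_differentiable[OF Cinf_on_pd[OF assms(5)] assms(4)] .
  have pd_comb: "pd v (\<lambda>q. (pd e1 F q + k * pd e2 F q) / 2) p = (pd v (pd e1 F) p + k * pd v (pd e2 F) p) / 2"
    for v e1 e2 k
    by (rule pd_eqI) (auto intro!: derivative_eq_intros pd_has_derivative diff)
  show ?thesis
    unfolding D1 D2 pd_comb pd_pd_commute[OF assms(3-5), of a1] pd_pd_commute[OF assms(3-5), of a2]
    by (simp add: field_simps)
qed

lemma first_order_op_mult:
  "first_order_op D \<Longrightarrow> F differentiable (at p) \<Longrightarrow> G differentiable (at p) \<Longrightarrow>
    D (\<lambda>q. F q * G q) p = D F p * G p + F p * D G p"
  by (auto simp add: first_order_op_def pd_mult algebra_simps add_divide_distrib)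

lemma first_order_op_add:
  "first_order_op D \<Longrightarrow> F differentiable (at p) \<Longrightarrow> G differentiable (at p) \<Longrightarrow>
    D (\<lambda>q. F q + G q) p = D F p + D G p"
  by (auto simp add: first_order_op_def pd_add algebra_simps add_divide_distrib)

lemma first_order_op_minus:
  "first_order_op D \<Longrightarrow> F differentiable (at p) \<Longrightarrow> D (\<lambda>q. - F q) p = - D F p"
  by (auto simp add: first_order_op_def pd_minus algebra_simps)

lemma first_order_op_const: "first_order_op D \<Longrightarrow> D (\<lambda>q. k) p = 0"
  by (auto simp add: first_order_op_def pd_const)

lemma first_order_op_sum:
  "first_order_op D \<Longrightarrow> finite A \<Longrightarrow> (\<And>i. i \<in> A \<Longrightarrow> F i differentiable (at p)) \<Longrightarrow>
    D (\<lambda>q. \<Sum>i\<in>A. F i q) p = (\<Sum>i\<in>A. D (F i) p)"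
  by (auto simp: first_order_op_def pd_sum sum_distrib_left sum.distrib simp flip: sum_divide_distrib)

lemma first_order_op_sum_mult:
  assumes "first_order_op D" "finite A"
    and "\<And>i. i \<in> A \<Longrightarrow> F i differentiable (at p)" "\<And>i. i \<in> A \<Longrightarrow> G i differentiable (at p)"
  shows "D (\<lambda>q. \<Sum>i\<in>A. F i q * G i q) p = (\<Sum>i\<in>A. D (F i) p * G i p + F i p * D (G i) p)"
proof -
  have "D (\<lambda>q. \<Sum>i\<in>A. F i q * G i q) p = (\<Sum>i\<in>A. D (\<lambda>q. F i q * G i q) p)"
    using assms by (intro first_order_op_sum) (auto intro: differentiable_mult)
  then show ?thesis using assms by (simp add: first_order_op_mult)
qed

lemma first_order_op_cong:
  "first_order_op D \<Longrightarrow> open S \<Longrightarrow> p \<in> S \<Longrightarrow> (\<And>q. q \<in> S \<Longrightarrow> F q = G q) \<Longrightarrow> D F p = D G p"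
  by (auto simp add: first_order_op_def pd_cong[of S p F G])

lemma cnj_dZ: "F differentiable (at p) \<Longrightarrow> cnj (dZ F p) = dZb (\<lambda>q. cnj (F q)) p"
  by (simp add: dZ_def dZb_def pd_cnj)

lemma cnj_dZb: "F differentiable (at p) \<Longrightarrow> cnj (dZb F p) = dZ (\<lambda>q. cnj (F q)) p"
  by (simp add: dZ_def dZb_def pd_cnj)

lemma cnj_dW: "F differentiable (at p) \<Longrightarrow> cnj (dW a F p) = dWb a (\<lambda>q. cnj (F q)) p"
  by (simp add: dW_def dWb_def pd_cnj)

lemma cnj_dWb: "F differentiable (at p) \<Longrightarrow> cnj (dWb a F p) = dW a (\<lambda>q. cnj (F q)) p"
  by (simp add: dW_def dWb_def pd_cnj)

section \<open>Wirtinger calculus on the product \<open>\<Sigma> \<times> U\<close>\<close>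

lemma linear_complex_line:
  fixes L :: "'a::real_vector \<Rightarrow> complex"
  assumes "linear L" "v = Re c *\<^sub>R v1 + Im c *\<^sub>R vi"
  shows "L v = c * ((L v1 - \<i> * L vi) / 2) + cnj c * ((L v1 + \<i> * L vi) / 2)"
proof -
  have "L v = of_real (Re c) * L v1 + of_real (Im c) * L vi"
    using assms by (simp add: linear_add linear_scale scaleR_conv_of_real)
  also have "\<dots> = c * ((L v1 - \<i> * L vi) / 2) + cnj c * ((L v1 + \<i> * L vi) / 2)"
    by (cases c) (simp add: Complex_eq field_simps)
  finally show ?thesis .
qed

lemma pd_Wirtinger_expansion:
  fixes h :: "complex \<times> (complex^'n::finite) \<Rightarrow> complex"
  assumes "h differentiable (at p)"
  shows "pd (x, y) h p = x * dZ h p + cnj x * dZb h p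
     + (\<Sum>a\<in>UNIV. y$a * dW a h p + cnj (y$a) * dWb a h p)"
proof -
  define L where "L = (\<lambda>v. pd v h p)"
  have "bounded_linear L"
    unfolding L_def using has_derivative_bounded_linear[OF pd_has_derivative[OF assms]] .
  then interpret L: bounded_linear L .
  have lin: "linear L" by (rule L.linear)
  have z: "L (c, 0) = c * dZ h p + cnj c * dZb h p" for c
    using linear_complex_line[OF lin, of "(c, 0)" c "(1, 0)" "(\<i>, 0)"]
    by (simp add: L_def dZ_def dZb_def complex_eq_iff)
  have w: "L (0, axis a c) = c * dW a h p + cnj c * dWb a h p" for a c
    using linear_complex_line[OF lin, of "(0, axis a c)" c "(0, axis a 1)" "(0, axis a \<i>)"]
    by (simp add: L_def dW_def dWb_def vec_eq_iff axis_def complex_eq_iff)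
  have "(\<Sum>a\<in>UNIV. axis a (y$a)) = y"
    by (simp add: vec_eq_iff axis_def sum.delta' cong: if_cong)
  then have "(x, y) = (x, 0) + (\<Sum>a\<in>UNIV. (0, axis a (y$a)))"
    by (simp add: prod_eq_iff fst_sum snd_sum)
  then have "L (x, y) = L (x, 0) + (\<Sum>a\<in>UNIV. L (0, axis a (y$a)))"
    by (simp add: L.add L.sum)
  then show ?thesis unfolding z w by (simp add: L_def)
qed

text \<open>For \<open>X = \<eta>\<close> these are the leaf derivatives \<open>\<partial>\<^sub>z = \<partial>/\<partial>z + \<eta>\<^sup>\<alpha> \<partial>/\<partial>w\<^sub>\<alpha>\<close> of the paper
  and its conjugate.\<close>

definition dZ_lift :: "('n::finite \<Rightarrow> complex \<times> (complex^'n) \<Rightarrow> complex)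
    \<Rightarrow> (complex \<times> (complex^'n) \<Rightarrow> complex) \<Rightarrow> complex \<times> (complex^'n) \<Rightarrow> complex" where
  "dZ_lift X F p = dZ F p + (\<Sum>a\<in>UNIV. X a p * dW a F p)"

definition dZb_lift :: "('n::finite \<Rightarrow> complex \<times> (complex^'n) \<Rightarrow> complex)
    \<Rightarrow> (complex \<times> (complex^'n) \<Rightarrow> complex) \<Rightarrow> complex \<times> (complex^'n) \<Rightarrow> complex" where
  "dZb_lift X F p = dZb F p + (\<Sum>a\<in>UNIV. cnj (X a p) * dWb a F p)"

lemma has_derivative_vec_components:
  fixes f :: "complex \<Rightarrow> complex^'n::finite"
  assumes "\<And>a. ((\<lambda>s. f s $ a) has_field_derivative d $ a) (at t)"
  shows "(f has_derivative (\<lambda>r. r *s d)) (at t)"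
proof -
  have "((\<lambda>x. f x \<bullet> i) has_derivative (\<lambda>x. (x *s d) \<bullet> i)) (at t)" if "i \<in> Basis" for i
  proof -
    from that obtain j u where i: "i = axis j u" "u \<in> Basis" unfolding Basis_vec_def by blast
    have "((\<lambda>s. f s $ j) has_derivative (\<lambda>r. d $ j * r)) (at t)"
      using assms has_field_derivative_imp_has_derivative by blast
    from bounded_linear.has_derivative[OF bounded_linear_inner_left this, of u]
    show ?thesis unfolding i by (simp add: inner_axis mult.commute)
  qed
  then show ?thesis using has_derivative_componentwise_within[of f "\<lambda>r. r *s d" t UNIV] by blast
qed

lemma
  fixes h :: "complex \<times> (complex^'n::finite) \<Rightarrow> complex" and f :: "complex \<Rightarrow> complex^'n"
  assumes h: "h differentiable (at (t, f t))"
    and f: "\<And>a. ((\<lambda>s. f s $ a) has_field_derivative X a (t, f t)) (at t)"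
  shows wz_along_curve: "wz (\<lambda>s. h (s, f s)) t = dZ_lift X h (t, f t)"
    and wzb_along_curve: "wzb (\<lambda>s. h (s, f s)) t = dZb_lift X h (t, f t)"
proof -
  define d where "d = (\<chi> a. X a (t, f t))"
  have "((\<lambda>s. (s, f s)) has_derivative (\<lambda>r. (r, r *s d))) (at t)"
    using f by (intro has_derivative_Pair has_derivative_ident has_derivative_vec_components) (simp add: d_def)
  from has_derivative_compose[OF this pd_has_derivative[OF h]]
  have curve: "pd r (\<lambda>s. h (s, f s)) t = pd (r, r *s d) h (t, f t)" for r
    by (rule pd_eqI)
  have "pd r (\<lambda>s. h (s, f s)) t = r * dZ_lift X h (t, f t) + cnj r * dZb_lift X h (t, f t)" for r
    by (simp add: curve pd_Wirtinger_expansion[OF h] dZ_lift_def dZb_lift_def d_def vector_scalar_mult_def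
        sum_distrib_left sum.distrib algebra_simps)
  note lin = this
  show "wz (\<lambda>s. h (s, f s)) t = dZ_lift X h (t, f t)"
    and "wzb (\<lambda>s. h (s, f s)) t = dZb_lift X h (t, f t)"
    unfolding wz_def wzb_def lin[of 1] lin[of \<i>] by (simp_all add: algebra_simps)
qed

lemma cnj_dZ_lift: "F differentiable (at p) \<Longrightarrow> cnj (dZ_lift X F p) = dZb_lift X (\<lambda>q. cnj (F q)) p"
  by (simp add: dZ_lift_def dZb_lift_def cnj_dZ cnj_dW)

lemma dZb_lift_cong:
  "open S \<Longrightarrow> p \<in> S \<Longrightarrow> (\<And>q. q \<in> S \<Longrightarrow> F q = G q) \<Longrightarrow> dZb_lift X F p = dZb_lift X G p"
  unfolding dZb_lift_def
  by (simp add: first_order_op_cong[OF first_order_op_dZb, of S p F G] first_order_op_cong[OF first_order_op_dWb, of S p F G])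

lemma dZb_lift_minus: "F differentiable (at p) \<Longrightarrow> dZb_lift X (\<lambda>q. - F q) p = - dZb_lift X F p"
  by (simp add: dZb_lift_def first_order_op_minus[OF first_order_op_dZb]
      first_order_op_minus[OF first_order_op_dWb] sum_negf algebra_simps)

lemma dZb_lift_mult:
  "F differentiable (at p) \<Longrightarrow> G differentiable (at p) \<Longrightarrow>
    dZb_lift X (\<lambda>q. F q * G q) p = dZb_lift X F p * G p + F p * dZb_lift X G p"
  by (simp add: dZb_lift_def first_order_op_mult[OF first_order_op_dZb]
      first_order_op_mult[OF first_order_op_dWb] sum.distrib sum_distrib_left sum_distrib_right algebra_simps)

lemma dZb_lift_sum:
  "finite A \<Longrightarrow> (\<And>i. i \<in> A \<Longrightarrow> F i differentiable (at p)) \<Longrightarrow>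
    dZb_lift X (\<lambda>q. \<Sum>i\<in>A. F i q) p = (\<Sum>i\<in>A. dZb_lift X (F i) p)"
  by (simp add: dZb_lift_def first_order_op_sum[OF first_order_op_dZb]
      first_order_op_sum[OF first_order_op_dWb] sum.distrib sum_distrib_left sum.swap[of _ A])

lemma first_order_op_dZb_lift_commute:
  assumes D: "first_order_op D" and S: "open S" "p \<in> S"
    and F: "Cinf_on S F" and X: "\<And>a. Cinf_on S (X a)"
  shows "D (dZb_lift X F) p = dZb_lift X (D F) p + (\<Sum>a\<in>UNIV. D (\<lambda>q. cnj (X a q)) p * dWb a F p)"
proof -
  have diff: "G differentiable (at p)" if "Cinf_on S G" for G
    using Cinf_on_imp_differentiable[OF that S(2)] .
  have sm: "Cinf_on S (dZb F)" "Cinf_on S (dWb a F)" "Cinf_on S (\<lambda>q. cnj (X a q))" for a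
    using first_order_op_Cinf_on[OF first_order_op_dZb S(1) F]
      first_order_op_Cinf_on[OF first_order_op_dWb S(1) F] Cinf_on_cnj[OF S(1) X] by auto
  have "D (dZb_lift X F) p = D (dZb F) p
      + (\<Sum>a\<in>UNIV. D (\<lambda>q. cnj (X a q)) p * dWb a F p + cnj (X a p) * D (dWb a F) p)"
    unfolding dZb_lift_def[abs_def]
    by (simp add: first_order_op_add[OF D] first_order_op_sum[OF D] first_order_op_mult[OF D]
        diff sm Cinf_on_sum[OF S(1)] Cinf_on_mult[OF S(1)])
  also have "\<dots> = dZb_lift X (D F) p + (\<Sum>a\<in>UNIV. D (\<lambda>q. cnj (X a q)) p * dWb a F p)"
    by (simp add: dZb_lift_def first_order_op_commute[OF D _ S F] first_order_op_dZb first_order_op_dWb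
        sum.distrib)
  finally show ?thesis .
qed

lemma pd_snd:
  assumes "h differentiable (at (snd p))"
  shows "pd v (\<lambda>q. h (snd q)) p = pd (snd v) h (snd p)"
  using has_derivative_compose[OF has_derivative_snd[OF has_derivative_ident] pd_has_derivative[OF assms]]
  by (rule pd_eqI)

lemma Ck_on_snd:
  assumes S: "open S" and SU: "\<And>p. p \<in> S \<Longrightarrow> snd p \<in> U" and h: "Ck_on k U h"
  shows "Ck_on k S (\<lambda>p. h (snd p))"
  using h
proof (induction k arbitrary: h)
  case 0
  then show ?case
    using SU by (auto intro!: continuous_on_compose2[of U _ S snd] continuous_on_snd continuous_on_id)
next
  case (Suc k)
  then show ?case using SU
    by (intro Ck_on_SucI[OF S, where f'="\<lambda>p v. pd (snd v) h (snd p)"] has_derivative_compose[OF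
          has_derivative_snd[OF has_derivative_ident] pd_has_derivative]) auto
qed

lemma Cinf_on_snd:
  "open S \<Longrightarrow> (\<And>p. p \<in> S \<Longrightarrow> snd p \<in> U) \<Longrightarrow> Cinf_on U h \<Longrightarrow> Cinf_on S (\<lambda>p. h (snd p))"
  unfolding Cinf_on_def using Ck_on_snd by blast

lemma dZ_snd: "h differentiable (at (snd p)) \<Longrightarrow> dZ (\<lambda>q. h (snd q)) p = 0"
  by (simp add: dZ_def pd_snd pd_zero_dir)

lemma dZb_snd: "h differentiable (at (snd p)) \<Longrightarrow> dZb (\<lambda>q. h (snd q)) p = 0"
  by (simp add: dZb_def pd_snd pd_zero_dir)

lemma dW_snd: "h differentiable (at (snd p)) \<Longrightarrow> dW a (\<lambda>q. h (snd q)) p = dWv a h (snd p)"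
  by (simp add: dW_def dWv_def pd_snd)

section \<open>Hermitian forms and inverse matrices\<close>

lemma Cinf_on_det:
  fixes M :: "'a::real_normed_vector \<Rightarrow> complex^'n::finite^'n"
  assumes S: "open S" and M: "\<And>i j. Cinf_on S (\<lambda>q. M q $ i $ j)"
  shows "Cinf_on S (\<lambda>q. det (M q))"
  unfolding det_def using S M
  by (intro Cinf_on_sum Cinf_on_mult Cinf_on_prod) (simp_all add: finite_permutations)

lemma matrix_inv_of_trivial_kernel:
  fixes T :: "complex^'n::finite^'n"
  assumes "\<And>x. T *v x = 0 \<Longrightarrow> x = 0"
  shows "T ** matrix_inv T = mat 1" "matrix_inv T ** T = mat 1" "det T \<noteq> 0"
proof -
  have inv: "invertible T"
    unfolding invertible_left_inverse matrix_left_invertible_ker using assms by blast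
  then have ex: "\<exists>T'. T ** T' = mat 1 \<and> T' ** T = mat 1" unfolding invertible_def .
  show "T ** matrix_inv T = mat 1" "matrix_inv T ** T = mat 1"
    unfolding matrix_inv_def using someI_ex[OF ex] by auto
  show "det T \<noteq> 0" using inv invertible_det_nz by blast
qed

lemma right_inverse_entry_cramer:
  fixes T :: "complex^'n::finite^'n"
  assumes "det T \<noteq> 0" and "T ** H = mat 1"
  shows "H $ a $ b = det (\<chi> i j. if j = a then (axis b 1 :: complex^'n) $ i else T$i$j) / det T"
proof -
  have "T *v (\<chi> k. H $ k $ b) = (\<chi> i. (T ** H) $ i $ b)"
    by (simp add: vec_eq_iff matrix_vector_mult_def matrix_matrix_mult_def)
  also have "\<dots> = axis b 1" using assms(2) by (simp add: vec_eq_iff mat_def axis_def)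
  finally have "(\<chi> k. H $ k $ b) = (\<chi> k. det (\<chi> i j. if j = k then (axis b 1 :: complex^'n) $ i else T$i$j) / det T)"
    using cramer[OF assms(1)] by blast
  then show ?thesis by (simp add: vec_eq_iff)
qed

lemma posdef_left_kernel:
  fixes g :: "'n::finite \<Rightarrow> 'n \<Rightarrow> complex"
  assumes pos: "\<And>v::complex^'n. v \<noteq> 0 \<Longrightarrow> Re (\<Sum>a\<in>UNIV. \<Sum>b\<in>UNIV. g a b * v$a * cnj (v$b)) > 0"
    and x: "\<And>b. (\<Sum>a\<in>UNIV. g a b * x$a) = 0"
  shows "x = 0"
proof (rule ccontr)
  assume "x \<noteq> 0"
  have "(\<Sum>a\<in>UNIV. \<Sum>b\<in>UNIV. g a b * x$a * cnj (x$b)) = (\<Sum>b\<in>UNIV. cnj (x$b) * (\<Sum>a\<in>UNIV. g a b * x$a))"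
    by (subst sum.swap) (simp add: sum_distrib_left algebra_simps)
  with pos[OF \<open>x \<noteq> 0\<close>] x show False by simp
qed

lemma posdef_right_kernel:
  fixes g :: "'n::finite \<Rightarrow> 'n \<Rightarrow> complex"
  assumes pos: "\<And>v::complex^'n. v \<noteq> 0 \<Longrightarrow> Re (\<Sum>a\<in>UNIV. \<Sum>b\<in>UNIV. g a b * v$a * cnj (v$b)) > 0"
    and y: "\<And>a. (\<Sum>b\<in>UNIV. g a b * y$b) = 0"
  shows "y = 0"
proof (rule ccontr)
  assume "y \<noteq> 0"
  define v where "v = (\<chi> a. cnj (y$a))"
  have "v \<noteq> 0" using \<open>y \<noteq> 0\<close> unfolding v_def by (auto simp: vec_eq_iff)
  moreover have "(\<Sum>a\<in>UNIV. \<Sum>b\<in>UNIV. g a b * v$a * cnj (v$b)) = (\<Sum>a\<in>UNIV. cnj (y$a) * (\<Sum>b\<in>UNIV. g a b * y$b))"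
    unfolding v_def by (simp add: sum_distrib_left algebra_simps)
  ultimately show False using pos[of v] y by simp
qed

lemma hermitian_form_real:
  fixes g :: "'n::finite \<Rightarrow> 'n \<Rightarrow> complex" and v :: "complex^'n"
  assumes "\<And>a b. cnj (g a b) = g b a"
  shows "Im (\<Sum>a\<in>UNIV. \<Sum>b\<in>UNIV. g a b * v$a * cnj (v$b)) = 0"
proof -
  let ?Q = "\<Sum>a\<in>UNIV. \<Sum>b\<in>UNIV. g a b * v$a * cnj (v$b)"
  have "cnj ?Q = (\<Sum>a\<in>UNIV. \<Sum>b\<in>UNIV. g b a * v$b * cnj (v$a))"
    by (simp add: assms mult.commute mult.left_commute)
  also have "\<dots> = ?Q" by (rule sum.swap)
  finally have "Im (cnj ?Q) = Im ?Q" by (rule arg_cong)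
  then show ?thesis unfolding cnj.sel(2) by linarith
qed

lemma neg_adjoint_square_form:
  fixes A g :: "'n::finite \<Rightarrow> 'n \<Rightarrow> complex" and s :: "complex^'n"
  assumes sym: "\<And>i c. (\<Sum>a\<in>UNIV. A a i * g a c) = (\<Sum>a\<in>UNIV. A a c * g a i)"
  defines "v \<equiv> \<chi> i. \<Sum>c\<in>UNIV. A i c * cnj (s$c)"
  shows "(\<Sum>a\<in>UNIV. \<Sum>b\<in>UNIV. \<Sum>c\<in>UNIV. - (\<Sum>i\<in>UNIV. A a i * cnj (A i b)) * s$b * cnj (s$c) * g a c)
       = - (\<Sum>a\<in>UNIV. \<Sum>i\<in>UNIV. g a i * v$a * cnj (v$i))"
proof -
  define w where "w i = (\<Sum>b\<in>UNIV. cnj (A i b) * s$b)" for i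
  have w: "cnj (v$i) = w i" for i unfolding v_def w_def by (simp add: mult.commute)
  have inner: "(\<Sum>b\<in>UNIV. (\<Sum>i\<in>UNIV. A a i * cnj (A i b)) * s$b * cnj (s$c) * g a c)
      = (\<Sum>i\<in>UNIV. w i * (cnj (s$c) * (A a i * g a c)))" for a c
    unfolding w_def by (simp add: sum_distrib_left sum_distrib_right mult_ac) (rule sum.swap)
  have contract: "(\<Sum>c\<in>UNIV. cnj (s$c) * (\<Sum>a\<in>UNIV. A a i * g a c)) = (\<Sum>a\<in>UNIV. g a i * v$a)" for i
    unfolding sym v_def by (simp add: sum_distrib_left sum_distrib_right mult_ac) (rule sum.swap)
  have "(\<Sum>a\<in>UNIV. \<Sum>b\<in>UNIV. \<Sum>c\<in>UNIV. - (\<Sum>i\<in>UNIV. A a i * cnj (A i b)) * s$b * cnj (s$c) * g a c)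
      = (\<Sum>a\<in>UNIV. \<Sum>c\<in>UNIV. \<Sum>b\<in>UNIV. - (\<Sum>i\<in>UNIV. A a i * cnj (A i b)) * s$b * cnj (s$c) * g a c)"
    by (rule sum.cong[OF refl]) (rule sum.swap)
  also have "\<dots> = - (\<Sum>a\<in>UNIV. \<Sum>c\<in>UNIV. \<Sum>i\<in>UNIV. w i * (cnj (s$c) * (A a i * g a c)))"
    by (simp add: inner sum_negf)
  also have "\<dots> = - (\<Sum>i\<in>UNIV. w i * (\<Sum>c\<in>UNIV. cnj (s$c) * (\<Sum>a\<in>UNIV. A a i * g a c)))"
    by (subst sum.swap, subst (2) sum.swap, subst sum.swap) (simp add: sum_distrib_left)
  also have "\<dots> = - (\<Sum>a\<in>UNIV. \<Sum>i\<in>UNIV. g a i * v$a * cnj (v$i))"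
    unfolding contract w[symmetric] by (subst sum.swap) (simp add: sum_distrib_left mult_ac)
  finally show ?thesis .
qed

lemma sum_UNIV_option:
  fixes f :: "'n::finite option \<Rightarrow> 'b::comm_monoid_add"
  shows "(\<Sum>j\<in>UNIV. f j) = f None + (\<Sum>b\<in>UNIV. f (Some b))"
  by (simp add: UNIV_option_conv sum.reindex)

section \<open>The homogeneous complex Monge-Ampere equation in a chart\<close>

locale hcma_chart =
  fixes \<Sigma> :: "complex set" and U :: "(complex^'n::finite) set"
    and g0 :: "complex^'n \<Rightarrow> 'n \<Rightarrow> 'n \<Rightarrow> complex"
    and \<phi> :: "complex \<times> (complex^'n) \<Rightarrow> real"
  assumes open_Sigma: "open \<Sigma>" and kaehler: "kaehler_metric_on U g0"
    and smooth: "smooth_on (\<Sigma> \<times> U) \<phi>"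
    and pos: "\<forall>p\<in>\<Sigma> \<times> U. \<forall>v::complex^'n. v \<noteq> 0 \<longrightarrow>
                Re (\<Sum>a\<in>UNIV. \<Sum>b\<in>UNIV. gmet g0 \<phi> p a b * v$a * cnj (v$b)) > 0"
    and MA: "\<forall>p\<in>\<Sigma> \<times> U. det (MAmat g0 \<phi> p) = 0"
begin

abbreviation "S \<equiv> \<Sigma> \<times> U"
abbreviation "\<Phi> \<equiv> phic \<phi>"
abbreviation "\<eta> \<equiv> eta g0 \<phi>"

definition G :: "'n \<Rightarrow> 'n \<Rightarrow> complex \<times> (complex^'n) \<Rightarrow> complex" where
  "G a b p = gmet g0 \<phi> p a b"

definition G0 :: "'n \<Rightarrow> 'n \<Rightarrow> complex \<times> (complex^'n) \<Rightarrow> complex" where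
  "G0 a b p = g0 (snd p) a b"

definition Pzb :: "'n \<Rightarrow> complex \<times> (complex^'n) \<Rightarrow> complex" where
  "Pzb b = dZ (dWb b \<Phi>)"

lemma open_U: "open U"
  using kaehler unfolding kaehler_metric_on_def by blast

lemma open_S: "open S"
  using open_Sigma open_U by (rule open_Times)

lemma Cinf_on_op: "first_order_op D \<Longrightarrow> Cinf_on S F \<Longrightarrow> Cinf_on S (D F)"
  using first_order_op_Cinf_on open_S by blast

lemma Cinf_Phi: "Cinf_on S \<Phi>"
  unfolding phic_def[abs_def]
  by (rule Cinf_on_linear[OF open_S bounded_linear_of_real smooth_on_imp_Cinf_on[OF smooth]])

lemma cnj_Phi: "(\<lambda>q. cnj (\<Phi> q)) = \<Phi>"
  by (simp add: phic_def fun_eq_iff)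

lemma Cinf_op_op_Phi: "first_order_op D1 \<Longrightarrow> first_order_op D2 \<Longrightarrow> Cinf_on S (D1 (D2 \<Phi>))"
  by (rule Cinf_on_op, assumption, rule Cinf_on_op, assumption, rule Cinf_Phi)

lemma Cinf_g0: "Cinf_on U (\<lambda>w. g0 w a b)"
  using kaehler unfolding kaehler_metric_on_def by (blast intro: smooth_on_imp_Cinf_on)

lemma g0_differentiable: "q \<in> S \<Longrightarrow> (\<lambda>w. g0 w a b) differentiable (at (snd q))"
  using Cinf_on_imp_differentiable[OF Cinf_g0] by auto

lemma Cinf_G0: "Cinf_on S (G0 a b)"
  unfolding G0_def[abs_def] by (rule Cinf_on_snd[OF open_S _ Cinf_g0]) auto

lemma G_eq: "G a b = (\<lambda>p. G0 a b p + dW a (dWb b \<Phi>) p)"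
  by (simp add: fun_eq_iff G_def gmet_def G0_def)

lemma Cinf_G: "Cinf_on S (G a b)"
  unfolding G_eq by (rule Cinf_on_add[OF open_S Cinf_G0 Cinf_op_op_Phi[OF first_order_op_dW first_order_op_dWb]])

lemma G0_hermitian: "q \<in> S \<Longrightarrow> cnj (G0 a b q) = G0 b a q"
  using kaehler unfolding kaehler_metric_on_def G0_def by auto

lemma G0_dZ: "q \<in> S \<Longrightarrow> dZ (G0 a b) q = 0"
  unfolding G0_def[abs_def] by (rule dZ_snd[OF g0_differentiable])

lemma G0_dZb: "q \<in> S \<Longrightarrow> dZb (G0 a b) q = 0"
  unfolding G0_def[abs_def] by (rule dZb_snd[OF g0_differentiable])

lemma G0_dW_sym:
  assumes q: "q \<in> S"
  shows "dW c (G0 a b) q = dW a (G0 c b) q"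
proof -
  have "dWv c (\<lambda>w. g0 w a b) (snd q) = dWv a (\<lambda>w. g0 w c b) (snd q)"
    using kaehler q unfolding kaehler_metric_on_def by auto
  then show ?thesis unfolding G0_def[abs_def] dW_snd[OF g0_differentiable[OF q]] .
qed

lemma G0_dWb_sym:
  assumes q: "q \<in> S"
  shows "dWb c (G0 a b) q = dWb b (G0 a c) q"
proof -
  have d: "G0 a b differentiable (at q)" "(\<lambda>q. cnj (G0 a b q)) differentiable (at q)" for a b
    using Cinf_on_imp_differentiable[OF Cinf_G0 q] Cinf_on_imp_differentiable[OF Cinf_on_cnj[OF open_S Cinf_G0] q]
    by auto
  have "dWb c (G0 a b) q = cnj (dW c (\<lambda>q. cnj (G0 a b q)) q)"
    using cnj_dW[OF d(2), of c] by simp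
  also have "dW c (\<lambda>q. cnj (G0 a b q)) q = dW c (G0 b a) q"
    by (rule first_order_op_cong[OF first_order_op_dW open_S q]) (simp add: G0_hermitian)
  also have "\<dots> = dW b (G0 c a) q" by (rule G0_dW_sym[OF q])
  also have "cnj \<dots> = dWb b (\<lambda>q. cnj (G0 c a q)) q" by (rule cnj_dW[OF d(1)])
  also have "\<dots> = dWb b (G0 a c) q"
    by (rule first_order_op_cong[OF first_order_op_dWb open_S q]) (simp add: G0_hermitian)
  finally show ?thesis .
qed

lemma G_hermitian:
  assumes q: "q \<in> S"
  shows "cnj (G a b q) = G b a q"
proof -
  have "cnj (dW a (dWb b \<Phi>) q) = dWb a (\<lambda>q. cnj (dWb b \<Phi> q)) q"
    by (rule cnj_dW[OF Cinf_on_imp_differentiable[OF Cinf_on_op[OF first_order_op_dWb Cinf_Phi] q]])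
  also have "\<dots> = dWb a (dW b \<Phi>) q"
    by (rule first_order_op_cong[OF first_order_op_dWb open_S q])
      (simp add: cnj_dWb[OF Cinf_on_imp_differentiable[OF Cinf_Phi]] cnj_Phi)
  also have "\<dots> = dW b (dWb a \<Phi>) q"
    by (rule first_order_op_commute[OF first_order_op_dWb first_order_op_dW open_S q Cinf_Phi])
  finally show ?thesis unfolding G_eq using G0_hermitian[OF q, of a b] by simp
qed

lemma G_split:
  assumes D: "first_order_op D" and q: "q \<in> S"
  shows "D (G a b) q = D (G0 a b) q + D (dW a (dWb b \<Phi>)) q"
  unfolding G_eq
  by (rule first_order_op_add[OF D Cinf_on_imp_differentiable[OF Cinf_G0 q]
        Cinf_on_imp_differentiable[OF Cinf_op_op_Phi[OF first_order_op_dW first_order_op_dWb] q]])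

lemma G_dW_sym:
  assumes q: "q \<in> S"
  shows "dW c (G a b) q = dW a (G c b) q"
proof -
  have "dW c (dW a (dWb b \<Phi>)) q = dW a (dW c (dWb b \<Phi>)) q"
    by (rule first_order_op_commute[OF first_order_op_dW first_order_op_dW open_S q
          Cinf_on_op[OF first_order_op_dWb Cinf_Phi]])
  then show ?thesis unfolding G_split[OF first_order_op_dW q] G0_dW_sym[OF q, of c a b] by simp
qed

lemma G_dWb_sym:
  assumes q: "q \<in> S"
  shows "dWb c (G a b) q = dWb b (G a c) q"
proof -
  have "dWb c (dW a (dWb b \<Phi>)) q = dW a (dWb c (dWb b \<Phi>)) q"
    by (rule first_order_op_commute[OF first_order_op_dWb first_order_op_dW open_S q
          Cinf_on_op[OF first_order_op_dWb Cinf_Phi]])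
  also have "\<dots> = dW a (dWb b (dWb c \<Phi>)) q"
    by (rule first_order_op_cong[OF first_order_op_dW open_S q])
      (rule first_order_op_commute[OF first_order_op_dWb first_order_op_dWb open_S _ Cinf_Phi])
  also have "\<dots> = dWb b (dW a (dWb c \<Phi>)) q"
    by (rule first_order_op_commute[OF first_order_op_dW first_order_op_dWb open_S q
          Cinf_on_op[OF first_order_op_dWb Cinf_Phi]])
  finally show ?thesis unfolding G_split[OF first_order_op_dWb q] G0_dWb_sym[OF q, of c a b] by simp
qed

lemma G_dZ: "q \<in> S \<Longrightarrow> dZ (G a b) q = dZ (dW a (dWb b \<Phi>)) q"
  unfolding G_split[OF first_order_op_dZ] G0_dZ by simp

lemma G_dZb: "q \<in> S \<Longrightarrow> dZb (G a b) q = dZb (dW a (dWb b \<Phi>)) q"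
  unfolding G_split[OF first_order_op_dZb] G0_dZb by simp

lemma G_posdef: "q \<in> S \<Longrightarrow> v \<noteq> 0 \<Longrightarrow> Re (\<Sum>a\<in>UNIV. \<Sum>b\<in>UNIV. G a b q * v$a * cnj (v$b)) > 0"
  using pos unfolding G_def by blast

lemma G_left_kernel: "q \<in> S \<Longrightarrow> (\<And>b. (\<Sum>a\<in>UNIV. G a b q * x$a) = 0) \<Longrightarrow> x = 0"
  by (rule posdef_left_kernel[OF G_posdef])

lemma G_right_kernel: "q \<in> S \<Longrightarrow> (\<And>a. (\<Sum>b\<in>UNIV. G a b q * y$b) = 0) \<Longrightarrow> y = 0"
  by (rule posdef_right_kernel[OF G_posdef])

lemma transpose_gmat_kernel: "q \<in> S \<Longrightarrow> transpose (gmat g0 \<phi> q) *v x = 0 \<Longrightarrow> x = 0"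
  by (rule G_left_kernel)
    (auto simp: vec_eq_iff matrix_vector_mult_def transpose_def gmat_def G_def)

lemma transpose_gmat_inverse:
  assumes q: "q \<in> S"
  shows "transpose (gmat g0 \<phi> q) ** matrix_inv (transpose (gmat g0 \<phi> q)) = mat 1"
    and "matrix_inv (transpose (gmat g0 \<phi> q)) ** transpose (gmat g0 \<phi> q) = mat 1"
    and "det (transpose (gmat g0 \<phi> q)) \<noteq> 0"
proof -
  have "\<And>x. transpose (gmat g0 \<phi> q) *v x = 0 \<Longrightarrow> x = 0" by (rule transpose_gmat_kernel[OF q])
  from matrix_inv_of_trivial_kernel[OF this] show
    "transpose (gmat g0 \<phi> q) ** matrix_inv (transpose (gmat g0 \<phi> q)) = mat 1"
    "matrix_inv (transpose (gmat g0 \<phi> q)) ** transpose (gmat g0 \<phi> q) = mat 1"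
    "det (transpose (gmat g0 \<phi> q)) \<noteq> 0" by blast+
qed

lemma ginv_G:
  assumes q: "q \<in> S"
  shows "(\<Sum>b\<in>UNIV. ginv g0 \<phi> q a b * G c b q) = (if a = c then 1 else 0)"
proof -
  have "(matrix_inv (transpose (gmat g0 \<phi> q)) ** transpose (gmat g0 \<phi> q)) $ a $ c = mat 1 $ a $ c"
    using transpose_gmat_inverse(2)[OF q] by simp
  then show ?thesis by (simp add: ginv_def G_def mat_def matrix_matrix_mult_def transpose_def gmat_def)
qed

lemma G_ginv:
  assumes q: "q \<in> S"
  shows "(\<Sum>a\<in>UNIV. G a b q * ginv g0 \<phi> q a c) = (if b = c then 1 else 0)"
proof -
  have "(transpose (gmat g0 \<phi> q) ** matrix_inv (transpose (gmat g0 \<phi> q))) $ b $ c = mat 1 $ b $ c"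
    using transpose_gmat_inverse(1)[OF q] by simp
  then show ?thesis by (simp add: ginv_def G_def mat_def matrix_matrix_mult_def transpose_def gmat_def)
qed

text \<open>Smoothness of the inverse metric comes from Cramer's rule.\<close>
lemma Cinf_ginv: "Cinf_on S (\<lambda>q. ginv g0 \<phi> q a b)"
proof -
  define T where "T q = transpose (gmat g0 \<phi> q)" for q
  define N where "N q = (\<chi> i j. if j = a then (axis b 1 :: complex^'n) $ i else T q $i$j)" for q
  have T: "Cinf_on S (\<lambda>q. T q $ i $ j)" for i j
    using Cinf_G[of j i] by (simp add: T_def transpose_def gmat_def G_def[abs_def])
  have N: "Cinf_on S (\<lambda>q. N q $ i $ j)" for i j
    by (cases "j = a") (simp_all add: N_def T open_S)
  have inv: "T q ** matrix_inv (T q) = mat 1" "det (T q) \<noteq> 0" if "q \<in> S" for q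
    unfolding T_def using transpose_gmat_inverse[OF that] by auto
  have "Cinf_on S (\<lambda>q. det (N q) / det (T q))"
    by (rule Cinf_on_divide[OF open_S Cinf_on_det[OF open_S N] Cinf_on_det[OF open_S T] inv(2)])
  then show ?thesis
    by (rule Cinf_on_cong[OF open_S, rotated])
      (simp add: ginv_def N_def right_inverse_entry_cramer[OF inv(2,1)] flip: T_def)
qed

lemma eta_eq: "\<eta> a q = - (\<Sum>b\<in>UNIV. ginv g0 \<phi> q a b * Pzb b q)"
  by (simp add: eta_def Pzb_def)

lemma Cinf_Pzb: "Cinf_on S (Pzb b)"
  unfolding Pzb_def by (rule Cinf_op_op_Phi[OF first_order_op_dZ first_order_op_dWb])

lemma Cinf_eta: "Cinf_on S (\<eta> a)"
  unfolding eta_eq[abs_def]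
  by (intro Cinf_on_minus[OF open_S] Cinf_on_sum[OF open_S] Cinf_on_mult[OF open_S] Cinf_ginv Cinf_Pzb) simp

lemma Cinf_cnj_eta: "Cinf_on S (\<lambda>q. cnj (\<eta> a q))"
  by (rule Cinf_on_cnj[OF open_S Cinf_eta])


lemma eta_G:
  assumes q: "q \<in> S"
  shows "(\<Sum>a\<in>UNIV. \<eta> a q * G a b q) = - Pzb b q"
proof -
  have "(\<Sum>a\<in>UNIV. \<eta> a q * G a b q) = - (\<Sum>c\<in>UNIV. Pzb c q * (\<Sum>a\<in>UNIV. G a b q * ginv g0 \<phi> q a c))"
    by (simp add: eta_eq sum_distrib_left sum_distrib_right sum_negf mult_ac) (rule sum.swap)
  also have "\<dots> = - Pzb b q" by (simp add: G_ginv[OF q] if_distrib cong: if_cong)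
  finally show ?thesis .
qed

lemma cnj_dWb_Phi: "q \<in> S \<Longrightarrow> cnj (dWb b \<Phi> q) = dW b \<Phi> q"
  using cnj_dWb[OF Cinf_on_imp_differentiable[OF Cinf_Phi], of q b] by (simp add: cnj_Phi)

lemma cnj_dZb_Phi: "q \<in> S \<Longrightarrow> cnj (dZb \<Phi> q) = dZ \<Phi> q"
  using cnj_dZb[OF Cinf_on_imp_differentiable[OF Cinf_Phi], of q] by (simp add: cnj_Phi)

lemma cnj_eta_G:
  assumes q: "q \<in> S"
  shows "(\<Sum>c\<in>UNIV. cnj (\<eta> c q) * G a c q) = - dZb (dW a \<Phi>) q"
proof -
  have "cnj (Pzb a q) = dZb (\<lambda>q. cnj (dWb a \<Phi> q)) q"
    unfolding Pzb_def by (rule cnj_dZ[OF Cinf_on_imp_differentiable[OF Cinf_on_op[OF first_order_op_dWb Cinf_Phi] q]])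
  also have "\<dots> = dZb (dW a \<Phi>) q"
    by (rule first_order_op_cong[OF first_order_op_dZb open_S q]) (rule cnj_dWb_Phi)
  finally show ?thesis
    using arg_cong[OF eta_G[OF q, of a], of cnj] by (simp add: G_hermitian[OF q])
qed

lemma MAmat_entries:
  "MAmat g0 \<phi> q $ None $ None = dZ (dZb \<Phi>) q"
  "MAmat g0 \<phi> q $ None $ Some b = Pzb b q"
  "MAmat g0 \<phi> q $ Some a $ None = dW a (dZb \<Phi>) q"
  "MAmat g0 \<phi> q $ Some a $ Some b = G a b q"
  by (simp_all add: MAmat_def Pzb_def G_def)

lemma MA_kernel:
  assumes q: "q \<in> S"
  obtains \<xi> y where "\<xi> \<noteq> 0"
    "dZ (dZb \<Phi>) q * \<xi> + (\<Sum>b\<in>UNIV. Pzb b q * y$b) = 0"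
    "\<And>a. dW a (dZb \<Phi>) q * \<xi> + (\<Sum>b\<in>UNIV. G a b q * y$b) = 0"
proof -
  define M where "M = MAmat g0 \<phi> q"
  have "det M = 0" using MA q unfolding M_def by blast
  then have "\<not> (\<forall>x. M *v x = 0 \<longrightarrow> x = 0)"
    using matrix_inv_of_trivial_kernel(3)[of M] by blast
  then obtain x where x: "M *v x = 0" "x \<noteq> 0" by blast
  define \<xi> where "\<xi> = x $ None"
  define y where "y = (\<chi> b. x $ Some b)"
  have row: "M$i$None * \<xi> + (\<Sum>b\<in>UNIV. M$i$(Some b) * y$b) = 0" for i
  proof -
    have "(M *v x) $ i = 0" using x(1) by simp
    then show ?thesis by (simp add: matrix_vector_mult_def sum_UNIV_option \<xi>_def y_def)
  qed
  have rows: "dZ (dZb \<Phi>) q * \<xi> + (\<Sum>b\<in>UNIV. Pzb b q * y$b) = 0"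
    "dW a (dZb \<Phi>) q * \<xi> + (\<Sum>b\<in>UNIV. G a b q * y$b) = 0" for a
    using row[of None] row[of "Some a"] by (simp_all only: M_def MAmat_entries)
  have "\<xi> \<noteq> 0"
  proof
    assume "\<xi> = 0"
    then have "y = 0" using rows(2) by (intro G_right_kernel[OF q]) simp
    have "x $ i = 0" for i
      using \<open>\<xi> = 0\<close> \<open>y = 0\<close> by (cases i) (auto simp: \<xi>_def y_def vec_eq_iff)
    then have "x = 0" by (simp add: vec_eq_iff)
    with x(2) show False by simp
  qed
  then show thesis using that rows by blast
qed

text \<open>The kernel of the complex Hessian of \<open>\<phi>\<close> is spanned by \<open>(1, \<eta>)\<close>.\<close>
lemma MA_lift:
  assumes q: "q \<in> S"
  shows "dZ_lift \<eta> (dZb \<Phi>) q = 0"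
proof -
  obtain \<xi> y where \<xi>: "\<xi> \<noteq> 0"
    and rowN: "dZ (dZb \<Phi>) q * \<xi> + (\<Sum>b\<in>UNIV. Pzb b q * y$b) = 0"
    and rowS0: "\<And>a. dW a (dZb \<Phi>) q * \<xi> + (\<Sum>b\<in>UNIV. G a b q * y$b) = 0"
    using MA_kernel[OF q] by blast
  have rowS: "(\<Sum>b\<in>UNIV. G a b q * y$b) = - (dW a (dZb \<Phi>) q * \<xi>)" for a
    using rowS0[of a] by (simp add: eq_neg_iff_add_eq_0 add.commute)
  have P: "Pzb b q = - (\<Sum>a\<in>UNIV. \<eta> a q * G a b q)" for b
    using eta_G[OF q, of b] by simp
  have "(\<Sum>b\<in>UNIV. Pzb b q * y$b) = - (\<Sum>b\<in>UNIV. \<Sum>a\<in>UNIV. \<eta> a q * (G a b q * y$b))"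
    unfolding P by (simp add: sum_distrib_right sum_negf mult.assoc)
  also have "\<dots> = - (\<Sum>a\<in>UNIV. \<eta> a q * (\<Sum>b\<in>UNIV. G a b q * y$b))"
    by (subst sum.swap) (simp add: sum_distrib_left)
  also have "\<dots> = \<xi> * (\<Sum>a\<in>UNIV. \<eta> a q * dW a (dZb \<Phi>) q)"
    unfolding rowS by (simp add: sum_distrib_left sum_negf mult_ac)
  finally have "\<xi> * dZ_lift \<eta> (dZb \<Phi>) q = 0"
    using rowN by (simp add: dZ_lift_def algebra_simps)
  with \<xi> show ?thesis by simp
qed

lemma MA_lift_cnj:
  assumes q: "q \<in> S"
  shows "dZb_lift \<eta> (dZ \<Phi>) q = 0"
proof -
  have "dZb_lift \<eta> (\<lambda>q. cnj (dZb \<Phi> q)) q = 0"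
    using arg_cong[OF MA_lift[OF q], of cnj]
    by (simp add: cnj_dZ_lift[OF Cinf_on_imp_differentiable[OF Cinf_on_op[OF first_order_op_dZb Cinf_Phi] q]])
  then show ?thesis
    using dZb_lift_cong[OF open_S q, of "\<lambda>q. cnj (dZb \<Phi> q)" "dZ \<Phi>"] cnj_dZb_Phi by simp
qed


lemma first_order_op_eta_G:
  assumes D: "first_order_op D" and q: "q \<in> S"
  shows "(\<Sum>a\<in>UNIV. D (\<eta> a) q * G a b q + \<eta> a q * D (G a b) q) = - D (Pzb b) q"
proof -
  have "D (\<lambda>q. \<Sum>a\<in>UNIV. \<eta> a q * G a b q) q = D (\<lambda>q. - Pzb b q) q"
    by (rule first_order_op_cong[OF D open_S q]) (rule eta_G)
  then show ?thesis
    by (simp add: first_order_op_sum_mult[OF D] first_order_op_minus[OF D] q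
        Cinf_on_imp_differentiable[OF Cinf_eta] Cinf_on_imp_differentiable[OF Cinf_G]
        Cinf_on_imp_differentiable[OF Cinf_Pzb])
qed

lemma dW_Pzb: "p \<in> S \<Longrightarrow> dW a (Pzb d) p = dZ (G a d) p"
  unfolding Pzb_def G_dZ
  by (rule first_order_op_commute[OF first_order_op_dW first_order_op_dZ open_S _
        Cinf_on_op[OF first_order_op_dWb Cinf_Phi]])

lemma dZ_lift_G:
  assumes p: "p \<in> S"
  shows "dZ_lift \<eta> (G a d) p = - (\<Sum>c\<in>UNIV. dW a (\<eta> c) p * G c d p)"
  using first_order_op_eta_G[OF first_order_op_dW p, of a d]
  by (simp add: dZ_lift_def dW_Pzb[OF p] G_dW_sym[OF p, of a _ d] sum.distrib algebra_simps
      eq_neg_iff_add_eq_0)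

lemma dWb_dZb_dW_Phi: "p \<in> S \<Longrightarrow> dWb b (dZb (dW a \<Phi>)) p = dZb (G a b) p"
proof -
  assume p: "p \<in> S"
  have "dWb b (dZb (dW a \<Phi>)) p = dZb (dWb b (dW a \<Phi>)) p"
    by (rule first_order_op_commute[OF first_order_op_dWb first_order_op_dZb open_S p
          Cinf_on_op[OF first_order_op_dW Cinf_Phi]])
  also have "\<dots> = dZb (dW a (dWb b \<Phi>)) p"
    by (rule first_order_op_cong[OF first_order_op_dZb open_S p])
      (rule first_order_op_commute[OF first_order_op_dWb first_order_op_dW open_S _ Cinf_Phi])
  finally show ?thesis using G_dZb[OF p] by simp
qed

lemma dZb_lift_G:
  assumes p: "p \<in> S"
  shows "dZb_lift \<eta> (G a b) p = - (\<Sum>c\<in>UNIV. dWb b (\<lambda>q. cnj (\<eta> c q)) p * G a c p)"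
proof -
  have sym: "dWb b (G a c) p = dWb c (G a b) p" for c by (rule G_dWb_sym[OF p])
  have "dWb b (\<lambda>q. \<Sum>c\<in>UNIV. cnj (\<eta> c q) * G a c q) p = dWb b (\<lambda>q. - dZb (dW a \<Phi>) q) p"
    by (rule first_order_op_cong[OF first_order_op_dWb open_S p]) (rule cnj_eta_G)
  then show ?thesis
    by (simp add: dZb_lift_def first_order_op_sum_mult[OF first_order_op_dWb]
        first_order_op_minus[OF first_order_op_dWb] p Cinf_on_imp_differentiable[OF Cinf_cnj_eta]
        Cinf_on_imp_differentiable[OF Cinf_G] Cinf_on_imp_differentiable[OF Cinf_op_op_Phi]
        first_order_op_dZb first_order_op_dW dWb_dZb_dW_Phi sym sum.distrib
        algebra_simps eq_neg_iff_add_eq_0)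
qed

lemma dWb_Pzb_sym: "p \<in> S \<Longrightarrow> dWb b (Pzb c) p = dWb c (Pzb b) p"
proof -
  assume p: "p \<in> S"
  have "dWb b (Pzb c) p = dZ (dWb b (dWb c \<Phi>)) p"
    unfolding Pzb_def
    by (rule first_order_op_commute[OF first_order_op_dWb first_order_op_dZ open_S p
          Cinf_on_op[OF first_order_op_dWb Cinf_Phi]])
  also have "\<dots> = dZ (dWb c (dWb b \<Phi>)) p"
    by (rule first_order_op_cong[OF first_order_op_dZ open_S p])
      (rule first_order_op_commute[OF first_order_op_dWb first_order_op_dWb open_S _ Cinf_Phi])
  also have "\<dots> = dWb c (Pzb b) p"
    unfolding Pzb_def
    by (rule first_order_op_commute[OF first_order_op_dZ first_order_op_dWb open_S p
          Cinf_on_op[OF first_order_op_dWb Cinf_Phi]])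
  finally show ?thesis .
qed

lemma dWb_dZ_Phi: "q \<in> S \<Longrightarrow> dWb c (dZ \<Phi>) q = Pzb c q"
  unfolding Pzb_def by (rule first_order_op_commute[OF first_order_op_dWb first_order_op_dZ open_S _ Cinf_Phi])

lemma dZb_lift_Pzb:
  assumes p: "p \<in> S"
  shows "dZb_lift \<eta> (Pzb b) p = - (\<Sum>c\<in>UNIV. dWb b (\<lambda>q. cnj (\<eta> c q)) p * Pzb c p)"
proof -
  have "dWb b (dZb_lift \<eta> (dZ \<Phi>)) p = dWb b (\<lambda>q. 0) p"
    by (rule first_order_op_cong[OF first_order_op_dWb open_S p]) (rule MA_lift_cnj)
  moreover have "dZb_lift \<eta> (dWb b (dZ \<Phi>)) p = dZb_lift \<eta> (Pzb b) p"
    by (rule dZb_lift_cong[OF open_S p]) (rule dWb_dZ_Phi)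
  ultimately show ?thesis
    using first_order_op_dZb_lift_commute[OF first_order_op_dWb open_S p
        Cinf_on_op[OF first_order_op_dZ Cinf_Phi] Cinf_eta, of b]
    by (simp add: first_order_op_const[OF first_order_op_dWb] dWb_dZ_Phi[OF p] sum_negf eq_neg_iff_add_eq_0)
qed

lemma eta_dZb_lift_G:
  assumes p: "p \<in> S"
  shows "(\<Sum>a\<in>UNIV. \<eta> a p * dZb_lift \<eta> (G a b) p) = (\<Sum>c\<in>UNIV. dWb b (\<lambda>q. cnj (\<eta> c q)) p * Pzb c p)"
proof -
  have "(\<Sum>a\<in>UNIV. \<eta> a p * dZb_lift \<eta> (G a b) p)
      = - (\<Sum>c\<in>UNIV. dWb b (\<lambda>q. cnj (\<eta> c q)) p * (\<Sum>a\<in>UNIV. \<eta> a p * G a c p))"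
    unfolding dZb_lift_G[OF p]
    by (simp add: sum_distrib_left sum_negf mult_ac) (rule sum.swap)
  then show ?thesis by (simp add: eta_G[OF p] sum_negf)
qed

lemma dZb_lift_eta:
  assumes p: "p \<in> S"
  shows "dZb_lift \<eta> (\<eta> r) p = 0"
proof -
  have "(\<Sum>a\<in>UNIV. G a b p * dZb_lift \<eta> (\<eta> a) p) = 0" for b
  proof -
    have "dZb_lift \<eta> (\<lambda>q. \<Sum>a\<in>UNIV. \<eta> a q * G a b q) p = dZb_lift \<eta> (\<lambda>q. - Pzb b q) p"
      by (rule dZb_lift_cong[OF open_S p]) (rule eta_G)
    then have "(\<Sum>a\<in>UNIV. dZb_lift \<eta> (\<eta> a) p * G a b p + \<eta> a p * dZb_lift \<eta> (G a b) p)
        = - dZb_lift \<eta> (Pzb b) p"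
      by (simp add: dZb_lift_sum dZb_lift_mult dZb_lift_minus differentiable_mult p
          Cinf_on_imp_differentiable[OF Cinf_eta] Cinf_on_imp_differentiable[OF Cinf_G]
          Cinf_on_imp_differentiable[OF Cinf_Pzb])
    then show ?thesis
      by (simp add: sum.distrib eta_dZb_lift_G[OF p] dZb_lift_Pzb[OF p] mult.commute)
  qed
  then have "(\<chi> a. dZb_lift \<eta> (\<eta> a) p) = 0"
    by (intro G_left_kernel[OF p]) (simp add: mult.commute)
  then show ?thesis by (simp add: vec_eq_iff)
qed

lemma ginv_dZ_lift_G:
  assumes p: "p \<in> S"
  shows "(\<Sum>d\<in>UNIV. ginv g0 \<phi> p r d * dZ_lift \<eta> (G a d) p) = - dW a (\<eta> r) p"
proof -
  have "(\<Sum>d\<in>UNIV. ginv g0 \<phi> p r d * dZ_lift \<eta> (G a d) p)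
      = - (\<Sum>c\<in>UNIV. dW a (\<eta> c) p * (\<Sum>d\<in>UNIV. ginv g0 \<phi> p r d * G c d p))"
    unfolding dZ_lift_G[OF p]
    by (simp add: sum_distrib_left sum_negf mult_ac) (rule sum.swap)
  then show ?thesis by (simp add: ginv_G[OF p] if_distrib cong: if_cong)
qed

lemma dZb_lift_dW_eta:
  assumes p: "p \<in> S"
  shows "dZb_lift \<eta> (dW a (\<eta> r)) p = - (\<Sum>i\<in>UNIV. dWb i (\<eta> r) p * dW a (\<lambda>q. cnj (\<eta> i q)) p)"
proof -
  have "dW a (dZb_lift \<eta> (\<eta> r)) p = dW a (\<lambda>q. 0) p"
    by (rule first_order_op_cong[OF first_order_op_dW open_S p]) (rule dZb_lift_eta)
  then show ?thesis
    using first_order_op_dZb_lift_commute[OF first_order_op_dW[of a] open_S p Cinf_eta[of r] Cinf_eta]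
    by (simp add: first_order_op_const[OF first_order_op_dW] mult.commute eq_neg_iff_add_eq_0)
qed

lemma dWb_eta_G_sym:
  assumes p: "p \<in> S"
  shows "(\<Sum>a\<in>UNIV. dWb i (\<eta> a) p * G a c p) = (\<Sum>a\<in>UNIV. dWb c (\<eta> a) p * G a i p)"
proof -
  have "(\<Sum>a\<in>UNIV. dWb i (\<eta> a) p * G a c p)
      = - dWb i (Pzb c) p - (\<Sum>a\<in>UNIV. \<eta> a p * dWb i (G a c) p)" for i c
    using first_order_op_eta_G[OF first_order_op_dWb p, of i c]
    by (simp add: sum.distrib algebra_simps eq_neg_iff_add_eq_0)
  moreover have "dWb i (G a c) p = dWb c (G a i) p" for a by (rule G_dWb_sym[OF p])
  ultimately show ?thesis by (simp add: dWb_Pzb_sym[OF p, of i c])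
qed

end

section \<open>Curvature along a leaf\<close>

lemma wzb_cong: "open D \<Longrightarrow> z \<in> D \<Longrightarrow> (\<And>t. t \<in> D \<Longrightarrow> F t = H t) \<Longrightarrow> wzb F z = wzb H z"
  unfolding wzb_def using pd_cong[of D z F H] by simp

locale hcma_leaf = hcma_chart \<Sigma> U g0 \<phi>
  for \<Sigma> :: "complex set" and U :: "(complex^'n::finite) set"
    and g0 :: "complex^'n \<Rightarrow> 'n \<Rightarrow> 'n \<Rightarrow> complex" and \<phi> :: "complex \<times> (complex^'n) \<Rightarrow> real" +
  fixes D :: "complex set" and f :: "complex \<Rightarrow> complex^'n"
  assumes open_D: "open D" and D_subset: "D \<subseteq> \<Sigma>" and leaf_U: "\<forall>z\<in>D. f z \<in> U"
    and leaf: "\<forall>z\<in>D. \<forall>a. ((\<lambda>t. f t $ a) has_field_derivative eta g0 \<phi> a (z, f z)) (at z)"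
begin

lemma leaf_in_S: "t \<in> D \<Longrightarrow> (t, f t) \<in> S"
  using D_subset leaf_U by auto

lemma leaf_connection:
  assumes t: "t \<in> D"
  shows "(\<Sum>d\<in>UNIV. ginv g0 \<phi> (t, f t) r d * wz (\<lambda>s. gmet g0 \<phi> (s, f s) a d) t) = - dW a (\<eta> r) (t, f t)"
proof -
  have "wz (\<lambda>s. gmet g0 \<phi> (s, f s) a d) t = dZ_lift \<eta> (G a d) (t, f t)" for d
    using wz_along_curve[where h="G a d" and f=f and X=\<eta>,
        OF Cinf_on_imp_differentiable[OF Cinf_G leaf_in_S[OF t]]] leaf t
    by (simp add: G_def)
  then show ?thesis by (simp add: ginv_dZ_lift_G[OF leaf_in_S[OF t]])
qed

lemma leaf_curv_eq:
  assumes z: "z \<in> D"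
  shows "leaf_curv g0 \<phi> f r a z = - (\<Sum>i\<in>UNIV. dWb i (\<eta> r) (z, f z) * dW a (etab g0 \<phi> i) (z, f z))"
proof -
  let ?H = "\<lambda>q. - dW a (\<eta> r) q"
  have "wzb (\<lambda>t. \<Sum>d\<in>UNIV. ginv g0 \<phi> (t, f t) r d * wz (\<lambda>s. gmet g0 \<phi> (s, f s) a d) t) z
      = wzb (\<lambda>t. ?H (t, f t)) z"
    by (rule wzb_cong[OF open_D z]) (rule leaf_connection)
  then have "leaf_curv g0 \<phi> f r a z = - wzb (\<lambda>t. ?H (t, f t)) z"
    unfolding leaf_curv_def by simp
  also have "\<dots> = - dZb_lift \<eta> ?H (z, f z)"
    using wzb_along_curve[where h="?H" and f=f and X=\<eta>] leaf z
    by (simp add: Cinf_on_imp_differentiable[OF Cinf_on_minus[OF open_S Cinf_on_op[OF first_order_op_dW Cinf_eta]]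
          leaf_in_S[OF z]])
  also have "\<dots> = dZb_lift \<eta> (dW a (\<eta> r)) (z, f z)"
    by (simp add: dZb_lift_minus Cinf_on_imp_differentiable[OF Cinf_on_op[OF first_order_op_dW Cinf_eta]
          leaf_in_S[OF z]])
  finally show ?thesis by (simp add: dZb_lift_dW_eta[OF leaf_in_S[OF z]] etab_def[abs_def])
qed

lemma leaf_curv_form:
  fixes s :: "complex^'n"
  assumes z: "z \<in> D"
  defines "v \<equiv> \<chi> i. \<Sum>c\<in>UNIV. dWb c (\<eta> i) (z, f z) * cnj (s$c)"
  shows "(\<Sum>a\<in>UNIV. \<Sum>b\<in>UNIV. \<Sum>c\<in>UNIV. leaf_curv g0 \<phi> f a b z * s$b * cnj (s$c) * gmet g0 \<phi> (z, f z) a c)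
       = - (\<Sum>a\<in>UNIV. \<Sum>i\<in>UNIV. G a i (z, f z) * v$a * cnj (v$i))"
proof -
  let ?p = "(z, f z)"
  have p: "?p \<in> S" by (rule leaf_in_S[OF z])
  have "dW b (etab g0 \<phi> i) ?p = cnj (dWb b (\<eta> i) ?p)" for b i
    by (simp add: cnj_dWb[OF Cinf_on_imp_differentiable[OF Cinf_eta p]] etab_def[abs_def])
  then have "leaf_curv g0 \<phi> f a b z = - (\<Sum>i\<in>UNIV. dWb i (\<eta> a) ?p * cnj (dWb b (\<eta> i) ?p))" for a b
    by (simp add: leaf_curv_eq[OF z])
  then show ?thesis
    unfolding v_def G_def[symmetric]
    by (simp only:) (rule neg_adjoint_square_form[OF dWb_eta_G_sym[OF p]])
qed

end

theorem theorem4p2p6: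
  fixes \<Sigma> :: "complex set"
    and U :: "(complex^'n::finite) set"
    and g0 :: "complex^'n \<Rightarrow> 'n \<Rightarrow> 'n \<Rightarrow> complex"
    and \<phi> :: "complex \<times> (complex^'n) \<Rightarrow> real"
    and D :: "complex set"
    and f :: "complex \<Rightarrow> complex^'n"
  assumes dom: "open \<Sigma>" "connected \<Sigma>" "\<Sigma> \<noteq> {}"
    and kaehler: "kaehler_metric_on U g0"
    and smooth: "smooth_on (\<Sigma> \<times> U) \<phi>"
    and pos: "\<forall>p\<in>\<Sigma> \<times> U. \<forall>v::complex^'n. v \<noteq> 0 \<longrightarrow>
                Re (\<Sum>a\<in>UNIV. \<Sum>b\<in>UNIV. gmet g0 \<phi> p a b * v$a * cnj (v$b)) > 0"
    and MA: "\<forall>p\<in>\<Sigma> \<times> U. det (MAmat g0 \<phi> p) = 0"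
    and leafD: "open D" "D \<subseteq> \<Sigma>" "\<forall>z\<in>D. f z \<in> U"
    and leaf: "\<forall>z\<in>D. \<forall>a. ((\<lambda>t. f t $ a) has_field_derivative eta g0 \<phi> a (z, f z)) (at z)"
  shows "\<forall>z\<in>D.
     (\<forall>r a. leaf_curv g0 \<phi> f r a z =
        - (\<Sum>i\<in>UNIV. dWb i (eta g0 \<phi> r) (z, f z) * dW a (etab g0 \<phi> i) (z, f z))) \<and>
     (\<forall>s::complex^'n.
        Im (\<Sum>a\<in>UNIV. \<Sum>b\<in>UNIV. \<Sum>c\<in>UNIV. leaf_curv g0 \<phi> f a b z * s$b * cnj (s$c) * gmet g0 \<phi> (z, f z) a c) = 0 \<and>
        Re (\<Sum>a\<in>UNIV. \<Sum>b\<in>UNIV. \<Sum>c\<in>UNIV. leaf_curv g0 \<phi> f a b z * s$b * cnj (s$c) * gmet g0 \<phi> (z, f z) a c) \<le> 0)"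
proof -
  interpret hcma_leaf \<Sigma> U g0 \<phi> D f
    using dom(1) kaehler smooth pos MA leafD leaf by unfold_locales
  show ?thesis
  proof (intro ballI conjI allI)
    fix z r a s
    assume z: "z \<in> D"
    show "leaf_curv g0 \<phi> f r a z = - (\<Sum>i\<in>UNIV. dWb i (\<eta> r) (z, f z) * dW a (etab g0 \<phi> i) (z, f z))"
      by (rule leaf_curv_eq[OF z])
    define v where "v = (\<chi> i. \<Sum>c\<in>UNIV. dWb c (\<eta> i) (z, f z) * cnj (s$c))"
    let ?Q = "\<Sum>a\<in>UNIV. \<Sum>i\<in>UNIV. G a i (z, f z) * v$a * cnj (v$i)"
    have form: "(\<Sum>a\<in>UNIV. \<Sum>b\<in>UNIV. \<Sum>c\<in>UNIV. leaf_curv g0 \<phi> f a b z * s$b * cnj (s$c) * gmet g0 \<phi> (z, f z) a c) = - ?Q"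
      unfolding v_def by (rule leaf_curv_form[OF z])
    have "Im ?Q = 0" by (rule hermitian_form_real) (rule G_hermitian[OF leaf_in_S[OF z]])
    then show "Im (\<Sum>a\<in>UNIV. \<Sum>b\<in>UNIV. \<Sum>c\<in>UNIV. leaf_curv g0 \<phi> f a b z * s$b * cnj (s$c) * gmet g0 \<phi> (z, f z) a c) = 0"
      unfolding form by simp
    have "Re ?Q \<ge> 0" using G_posdef[OF leaf_in_S[OF z], of v] by (cases "v = 0") auto
    then show "Re (\<Sum>a\<in>UNIV. \<Sum>b\<in>UNIV. \<Sum>c\<in>UNIV. leaf_curv g0 \<phi> f a b z * s$b * cnj (s$c) * gmet g0 \<phi> (z, f z) a c) \<le> 0"
      unfolding form by simp
  qed
qed

end
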